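(* Assume Hypotheses 1, 2 and 3 (see context), and let $h:K\to\mathbb{R}^n$ be the function with $\Gamma=\{(h(z),z):z\in K\}$. Then $h$ is differentiable at every $z\in K$, and $Dh(z)=H(h(z),z)$ for all $z\in K$.
   Context: System $\dot x=F(x)$ with $F=(f,g)$, i.e. $\dot a=f(a,z)$, $\dot z=g(a,z)$, $(a,z)\in\mathbb{R}^n\times\mathbb{R}^m$, $X=\mathbb{R}^n\times\mathbb{R}^m$, flow $\Phi(t,x)$. Euclidean inner product, norm, operator norm. $\mathcal{L}(x_1,x_2)=\|a_2-a_1\|^2-\|z_2-z_1\|^2$, $\mathcal{C}(x)=\{x'\in X:\mathcal{L}(x',x)\ge0\}$, $\mathbf{0}$ the zero vector of $X$; $\Pi(a,z)=a$, $\Pi_\perp(a,z)=z$; $\mathbb{B}_d(x)=\{(a',z'):\|a'-a\|\le d,\|z'-z\|\le d\}$. $\Gamma\subseteq U$ positively invariant means $\Phi(t,x)$ is defined for all $t\ge0$ for $x\in\Gamma$ and $\Phi(t,\Gamma)\subseteq\Gamma$. Hypothesis 1: $U$ open and convex, and there is $d>0$ with $\mathcal{C}(x)\cap U\subset\mathbb{B}_d(x)$ for all $x\in U$. Hypothesis 2: $f,g$ are $C^1$ on $U$; there exist continuous $\alpha>0$, $\ell\ge0$ on $U$ and $c_1>0$ with, for all $x\in U$: $\langle a',D_af(x)a'\rangle\ge\alpha(x)\|a'\|^2$; $\langle z',D_zg(x)z'\rangle\le\ell(x)\|z'\|^2$; $\alpha(x)\ge\ell(x)+\|D_zf(x)\|+\|D_ag(x)\|+c_1$.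 Hypothesis 3: $\Gamma\subset U$ is positively invariant and $\Pi_\perp(\Gamma)=\Pi_\perp(U)$. Let $K:=\Pi_\perp(U)$; under these hypotheses $\Gamma$ is the graph of a function $h:K\to\mathbb{R}^n$ with $\|h(z_2)-h(z_1)\|<\|z_2-z_1\|$ for $z_1\ne z_2$. For $x\in\Gamma$, $Q(t,x)$ ($t\ge0$) denotes the fundamental matrix solution of $\dot{\mathbf{x}}=DF(\Phi(t,x))\mathbf{x}$ with $Q(0,x)=I$, and $T(x):=\{\mathbf{x}\in X: \mathcal{L}(Q(t,x)\mathbf{x},\mathbf{0})\le0\text{ for all }t\ge0\}$. Under these hypotheses each $T(x)$ is the graph of a unique linear map $H(x):\mathbb{R}^m\to\mathbb{R}^n$, i.e. $T(x)=\{(H(x)\mathbf{z},\mathbf{z}):\mathbf{z}\in\mathbb{R}^m\}$. *)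

theory Defs
  imports "HOL-Analysis.Analysis"
begin

definition Lfun :: "('a::real_normed_vector \<times> 'b::real_normed_vector) \<Rightarrow> ('a \<times> 'b) \<Rightarrow> real" where
  "Lfun x1 x2 = (norm (fst x2 - fst x1))^2 - (norm (snd x2 - snd x1))^2"

definition Ccone :: "('a::real_normed_vector \<times> 'b::real_normed_vector) \<Rightarrow> ('a \<times> 'b) set" where
  "Ccone x = {x'. Lfun x' x \<ge> 0}"

definition Bbox :: "real \<Rightarrow> ('a::real_normed_vector \<times> 'b::real_normed_vector) \<Rightarrow> ('a \<times> 'b) set" where
  "Bbox d x = {x'. norm (fst x' - fst x) \<le> d \<and> norm (snd x' - snd x) \<le> d}"

definition DFapp :: "('a \<times> 'b \<Rightarrow> ('a \<times> 'b) \<Rightarrow>\<^sub>L 'a) \<Rightarrow> ('a \<times> 'b \<Rightarrow> ('a \<times> 'b) \<Rightarrow>\<^sub>L 'b)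
     \<Rightarrow> ('a::real_normed_vector \<times> 'b::real_normed_vector) \<Rightarrow> ('a \<times> 'b) \<Rightarrow> ('a \<times> 'b)" where
  "DFapp f' g' y v = (blinfun_apply (f' y) v, blinfun_apply (g' y) v)"

text \<open>T(x): initial vectors v whose solution Q(t,x)v of the variational equation
  along the flow Phi(t,x) satisfies L(Q(t,x)v, 0) <= 0 for all t >= 0.
  (The solution of this linear ODE with continuous coefficients exists and is unique.)\<close>
definition Tset :: "('a \<times> 'b \<Rightarrow> ('a \<times> 'b) \<Rightarrow>\<^sub>L 'a) \<Rightarrow> ('a \<times> 'b \<Rightarrow> ('a \<times> 'b) \<Rightarrow>\<^sub>L 'b)
     \<Rightarrow> (real \<Rightarrow> ('a::real_normed_vector \<times> 'b::real_normed_vector) \<Rightarrow> ('a \<times> 'b))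
     \<Rightarrow> ('a \<times> 'b) \<Rightarrow> ('a \<times> 'b) set" where
  "Tset f' g' Phi x = {v. \<forall>w. (w 0 = v \<and>
       (\<forall>t\<ge>0. (w has_vector_derivative DFapp f' g' (Phi t x) (w t)) (at t within {0..})))
       \<longrightarrow> (\<forall>t\<ge>0. Lfun (w t) 0 \<le> 0)}"

definition Hmap :: "('a \<times> 'b \<Rightarrow> ('a \<times> 'b) \<Rightarrow>\<^sub>L 'a) \<Rightarrow> ('a \<times> 'b \<Rightarrow> ('a \<times> 'b) \<Rightarrow>\<^sub>L 'b)
     \<Rightarrow> (real \<Rightarrow> ('a::real_normed_vector \<times> 'b::real_normed_vector) \<Rightarrow> ('a \<times> 'b))
     \<Rightarrow> ('a \<times> 'b) \<Rightarrow> ('b \<Rightarrow> 'a)" where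
  "Hmap f' g' Phi x = (THE H. linear H \<and> Tset f' g' Phi x = {(H z, z) | z. True})"

end

theory Submission
  imports Defs
begin

text \<open>
  Under Hypotheses 1--3 the graph \<open>\<Gamma>\<close> of \<open>h\<close> is invariant
  under the flow, and differences of points of \<open>\<Gamma>\<close> never lie in the cone \<open>L > 0\<close>, so \<open>h\<close> is
  1-Lipschitz.  To show \<open>Dh(z\<^sub>0) = H(h z\<^sub>0, z\<^sub>0)\<close> we use a sequential criterion: every limit \<open>(a, u)\<close> of
  normalised difference quotients of \<open>h\<close> at \<open>z\<^sub>0\<close> is a limit of normalised secants of \<open>\<Gamma>\<close>.  The flow
  maps secants of \<open>\<Gamma>\<close> to secants of \<open>\<Gamma>\<close> and is differentiable with derivative \<open>Q(t, x\<^sub>0)\<close>, so the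
  variational orbit of \<open>(a, u)\<close> never enters the cone: \<open>(a, u) \<in> T(x\<^sub>0)\<close>.  Finally \<open>T(x\<^sub>0)\<close> is the
  graph of a linear map \<open>H(x\<^sub>0)\<close>, because the variational flow expands horizontal vectors
  exponentially faster than vectors outside the cone (a dominated splitting).
\<close>

section \<open>Scalar differential inequalities\<close>

text \<open>A function with nonnegative derivative on an interval is nondecreasing; derivatives are
  taken within an arbitrary superset of the interval, as they are for one-sided flows.\<close>
lemma nonneg_deriv_imp_le:
  fixes \<phi> :: "real \<Rightarrow> real"
  assumes ab: "a \<le> b" and S: "{a..b} \<subseteq> S"
    and d: "\<And>t. a \<le> t \<Longrightarrow> t \<le> b \<Longrightarrow> (\<phi> has_real_derivative \<phi>' t) (at t within S)"
    and nn: "\<And>t. a < t \<Longrightarrow> t < b \<Longrightarrow> \<phi>' t \<ge> 0"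
  shows "\<phi> a \<le> \<phi> b"
proof (rule DERIV_nonneg_imp_increasing_open[OF ab])
  fix x assume x: "a < x" "x < b"
  have "(\<phi> has_real_derivative \<phi>' x) (at x within {a<..<b})"
    using x S by (intro has_field_derivative_subset[OF d[of x]]) auto
  moreover have "at x within {a<..<b} = at x" by (rule at_within_open) (use x in auto)
  ultimately show "\<exists>y. (\<phi> has_real_derivative y) (at x) \<and> 0 \<le> y" using nn x by auto
next
  show "continuous_on {a..b} \<phi>"
    using d S by (intro DERIV_continuous_on) (auto intro: has_field_derivative_subset)
qed

text \<open>Continuous induction: if a continuous function stays below \<open>c\<close> at every time \<open>s\<close> at which it
  stayed below \<open>c\<close> on the open interval \<open>(a, s)\<close>, then it stays below \<open>c\<close> on all of \<open>[a, b]\<close>.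
  (Otherwise the first time at which the level \<open>c\<close> is reached gives a contradiction.)\<close>
lemma continuous_induction:
  fixes \<phi> :: "real \<Rightarrow> real"
  assumes cont: "continuous_on {a..b} \<phi>"
    and step: "\<And>s. a \<le> s \<Longrightarrow> s \<le> b \<Longrightarrow> (\<And>t. a < t \<Longrightarrow> t < s \<Longrightarrow> \<phi> t < c) \<Longrightarrow> \<phi> s < c"
    and s: "a \<le> s" "s \<le> b"
  shows "\<phi> s < c"
proof (rule ccontr)
  assume "\<not> \<phi> s < c"
  define Z where "Z = {r \<in> {a..b}. c \<le> \<phi> r}"
  have "Z \<noteq> {}" using s \<open>\<not> \<phi> s < c\<close> unfolding Z_def by auto
  moreover have "closed Z"
    using continuous_closed_preimage[OF cont closed_atLeastAtMost closed_atLeast, of c]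
    unfolding Z_def by (simp add: vimage_def Int_def conj_commute)
  moreover have bdd: "bdd_below Z" unfolding Z_def by (auto intro: bdd_belowI[of _ a])
  ultimately have first: "Inf Z \<in> Z" using closed_contains_Inf by blast
  have "\<phi> t < c" if "a < t" "t < Inf Z" for t
  proof -
    have "t \<notin> Z" using that cInf_lower[OF _ bdd] by force
    then show ?thesis using that first unfolding Z_def by auto
  qed
  then have "\<phi> (Inf Z) < c" using first step unfolding Z_def by auto
  then show False using first unfolding Z_def by auto
qed

text \<open>This is the invariance of the cone under the (variational) flow.\<close>
lemma positive_persists:
  fixes \<phi> :: "real \<Rightarrow> real"
  assumes d: "\<And>t. t \<ge> t0 \<Longrightarrow> (\<phi> has_real_derivative \<phi>' t) (at t within {t0..})"
    and nn: "\<And>t. t \<ge> t0 \<Longrightarrow> \<phi> t > 0 \<Longrightarrow> \<phi>' t \<ge> 0"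
    and p0: "\<phi> t0 > 0" and t: "t \<ge> t0"
  shows "\<phi> t \<ge> \<phi> t0"
proof -
  have mono: "\<phi> t0 \<le> \<phi> s"
    if s: "t0 \<le> s" and above: "\<And>r. t0 < r \<Longrightarrow> r < s \<Longrightarrow> \<phi> r > \<phi> t0 / 2" for s
  proof (rule nonneg_deriv_imp_le[OF s _ d])
    fix r assume "t0 < r" "r < s"
    then show "\<phi>' r \<ge> 0" using above[of r] p0 nn[of r] by auto
  qed auto
  have cont: "continuous_on {t0..t} \<phi>"
    by (intro DERIV_continuous_on[where D=\<phi>'] has_field_derivative_subset[OF d]) auto
  have above: "- \<phi> s < - (\<phi> t0 / 2)" if "t0 \<le> s" "s \<le> t" for s
  proof (rule continuous_induction[where \<phi>="\<lambda>s. - \<phi> s", OF _ _ that])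
    show "continuous_on {t0..t} (\<lambda>s. - \<phi> s)" using cont by (intro continuous_intros)
    fix s assume "t0 \<le> s" "s \<le> t"
      and "\<And>r. t0 < r \<Longrightarrow> r < s \<Longrightarrow> - \<phi> r < - (\<phi> t0 / 2)"
    then show "- \<phi> s < - (\<phi> t0 / 2)" using mono[of s] p0 by fastforce
  qed
  show ?thesis using mono[OF t] above by force
qed

lemma exponential_growth:
  fixes \<phi> :: "real \<Rightarrow> real"
  assumes d: "\<And>t. t \<ge> 0 \<Longrightarrow> (\<phi> has_real_derivative \<phi>' t) (at t within {0..})"
    and nn: "\<And>t. t \<ge> 0 \<Longrightarrow> \<phi> t > 0 \<Longrightarrow> \<phi>' t \<ge> k * \<phi> t"
    and p0: "\<phi> 0 > 0" and t: "t \<ge> 0"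
  shows "\<phi> t \<ge> \<phi> 0 * exp (k * t)"
proof -
  define \<psi> where "\<psi> t = \<phi> t * exp (- k * t)" for t
  have d\<psi>: "(\<psi> has_real_derivative (\<phi>' s * exp (- k * s) - \<phi> s * (k * exp (- k * s)))) (at s within {0..})"
    if "s \<ge> 0" for s
    unfolding \<psi>_def using d[OF that] by (auto intro!: derivative_eq_intros)
  have "\<psi> t \<ge> \<psi> 0"
  proof (rule positive_persists[OF d\<psi> _ _ t])
    fix s assume s: "s \<ge> 0" "\<psi> s > 0"
    then have "\<phi>' s \<ge> k * \<phi> s" using nn by (simp add: \<psi>_def zero_less_mult_iff)
    then show "\<phi>' s * exp (- k * s) - \<phi> s * (k * exp (- k * s)) \<ge> 0"
      by (simp add: algebra_simps mult_right_mono)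
  qed (use p0 \<psi>_def in auto)
  then have "\<phi> t * exp (- k * t) * exp (k * t) \<ge> \<phi> 0 * exp (k * t)"
    unfolding \<psi>_def by (simp add: mult_right_mono)
  then show ?thesis by (simp add: mult.assoc exp_add[symmetric])
qed

lemma gronwall:
  fixes \<psi> :: "real \<Rightarrow> real"
  assumes d: "\<And>t. 0 \<le> t \<Longrightarrow> t \<le> T \<Longrightarrow> (\<psi> has_real_derivative \<psi>' t) (at t within S)"
    and S: "{0..T} \<subseteq> S"
    and le: "\<And>t. 0 < t \<Longrightarrow> t < T \<Longrightarrow> \<psi>' t \<le> K * \<psi> t"
    and T: "0 \<le> T"
  shows "\<psi> T \<le> \<psi> 0 * exp (K * T)"
proof -
  define \<theta> where "\<theta> t = - (\<psi> t * exp (- K * t))" for t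
  have "\<theta> 0 \<le> \<theta> T"
  proof (rule nonneg_deriv_imp_le[OF T S])
    fix s assume "0 \<le> s" "s \<le> T"
    then show "(\<theta> has_real_derivative - (\<psi>' s * exp (- K * s) - \<psi> s * (K * exp (- K * s)))) (at s within S)"
      unfolding \<theta>_def using d by (auto intro!: derivative_eq_intros)
  next
    fix s assume "0 < s" "s < T"
    then have "\<psi>' s \<le> K * \<psi> s" using le by auto
    then show "0 \<le> - (\<psi>' s * exp (- K * s) - \<psi> s * (K * exp (- K * s)))"
      by (simp add: algebra_simps mult_right_mono)
  qed
  then have "\<psi> T * exp (- K * T) * exp (K * T) \<le> \<psi> 0 * exp (K * T)"
    unfolding \<theta>_def by (simp add: mult_right_mono)
  then show ?thesis by (simp add: mult.assoc exp_add[symmetric])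
qed

lemma ratio_comparison:
  fixes p q :: "real \<Rightarrow> real"
  assumes dp: "\<And>s. s \<ge> 0 \<Longrightarrow> (p has_real_derivative p' s) (at s within {0..})"
    and dq: "\<And>s. s \<ge> 0 \<Longrightarrow> (q has_real_derivative q' s) (at s within {0..})"
    and ppos: "\<And>s. s \<ge> 0 \<Longrightarrow> p s > 0" and qnn: "\<And>s. s \<ge> 0 \<Longrightarrow> q s \<ge> 0"
    and pk: "\<And>s. s \<ge> 0 \<Longrightarrow> p' s \<ge> k s * p s"
    and qk: "\<And>s. s \<ge> 0 \<Longrightarrow> q' s \<le> k s * q s"
    and t: "t \<ge> 0"
  shows "q t * p 0 \<le> q 0 * p t"
proof -
  define R' where "R' s = (q' s * p s - q s * p' s) / (p s * p s)" for s
  have "- (q 0 / p 0) \<le> - (q t / p t)"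
  proof (rule nonneg_deriv_imp_le[OF t, where \<phi>="\<lambda>s. - (q s / p s)" and \<phi>'="\<lambda>s. - R' s"])
    fix s :: real assume s: "0 \<le> s"
    show "((\<lambda>s. - (q s / p s)) has_real_derivative - R' s) (at s within {0..})"
      unfolding R'_def using DERIV_minus[OF DERIV_divide[OF dq[OF s] dp[OF s]]] ppos[OF s] by simp
  next
    fix s :: real assume "0 < s"
    then have s: "s \<ge> 0" by simp
    have "q' s * p s \<le> k s * q s * p s"
      using qk[OF s] ppos[OF s] by (intro mult_right_mono) auto
    also have "\<dots> = q s * (k s * p s)" by (simp add: algebra_simps)
    also have "\<dots> \<le> q s * p' s" using pk[OF s] qnn[OF s] by (intro mult_left_mono) auto
    finally show "0 \<le> - R' s"
      unfolding R'_def using ppos[OF s] by (simp add: divide_nonpos_pos)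
  qed auto
  then show ?thesis using ppos[OF t] ppos[of 0] by (simp add: divide_le_eq field_simps)
qed

lemma norm_squared_deriv:
  fixes u :: "real \<Rightarrow> 'x::real_inner"
  assumes "(u has_vector_derivative u') (at t within S)"
  shows "((\<lambda>t. (norm (u t))\<^sup>2) has_real_derivative 2 * inner (u t) u') (at t within S)"
proof -
  have "((\<lambda>t. inner (u t) (u t)) has_real_derivative inner (u t) u' + inner u' (u t)) (at t within S)"
    using assms unfolding has_vector_derivative_def has_field_derivative_def
    by (auto intro!: derivative_eq_intros simp: inner_commute)
  then show ?thesis by (simp add: power2_norm_eq_inner inner_commute)
qed

text \<open>Growth bound for a curve whose velocity is bounded affinely by its size,
  \<open>|r'| \<le> E + M |r|\<close>: Gronwall's inequality applied to \<open>|r|\<^sup>2 + E\<^sup>2\<close>.\<close>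
lemma affine_growth_bound:
  fixes r :: "real \<Rightarrow> 'x::real_inner"
  assumes d: "\<And>t. 0 \<le> t \<Longrightarrow> t \<le> T \<Longrightarrow> (r has_vector_derivative r' t) (at t within {0..})"
    and bound: "\<And>t. 0 < t \<Longrightarrow> t < T \<Longrightarrow> norm (r' t) \<le> E + M * norm (r t)"
    and M: "M \<ge> 0" and E: "E \<ge> 0" and T: "T \<ge> 0"
  shows "norm (r T) \<le> (norm (r 0) + E) * exp ((M + 1) * T)"
proof -
  have "(norm (r T))\<^sup>2 + E\<^sup>2 \<le> ((norm (r 0))\<^sup>2 + E\<^sup>2) * exp ((2 * M + 1) * T)"
  proof (rule gronwall[where \<psi>="\<lambda>t. (norm (r t))\<^sup>2 + E\<^sup>2", OF _ _ _ T])
    fix t :: real assume "0 \<le> t" "t \<le> T"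
    then show "((\<lambda>t. (norm (r t))\<^sup>2 + E\<^sup>2) has_real_derivative 2 * inner (r t) (r' t)) (at t within {0..})"
      using DERIV_add[OF norm_squared_deriv[OF d] DERIV_const[of "E\<^sup>2"]] by simp
  next
    fix t :: real assume "0 < t" "t < T"
    have "inner (r t) (r' t) \<le> norm (r t) * norm (r' t)" by (rule norm_cauchy_schwarz)
    also have "\<dots> \<le> norm (r t) * (E + M * norm (r t))"
      using bound[OF \<open>0 < t\<close> \<open>t < T\<close>] by (intro mult_left_mono) auto
    finally have "2 * inner (r t) (r' t) \<le> 2 * norm (r t) * E + 2 * M * (norm (r t))\<^sup>2"
      by (simp add: algebra_simps power2_eq_square)
    moreover have "2 * norm (r t) * E \<le> (norm (r t))\<^sup>2 + E\<^sup>2"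
      using sum_squares_bound[of "norm (r t)" E] by (simp add: power2_eq_square mult.assoc)
    moreover have "0 \<le> 2 * M * E\<^sup>2" using M by simp
    ultimately show "2 * inner (r t) (r' t) \<le> (2 * M + 1) * ((norm (r t))\<^sup>2 + E\<^sup>2)"
      by (simp add: algebra_simps)
  qed auto
  also have "\<dots> \<le> ((norm (r 0) + E) * exp ((M + 1) * T))\<^sup>2"
  proof -
    have "(norm (r 0))\<^sup>2 + E\<^sup>2 \<le> (norm (r 0) + E)\<^sup>2" using E by (simp add: power2_sum)
    moreover have "exp ((2 * M + 1) * T) \<le> (exp ((M + 1) * T))\<^sup>2"
      using T by (simp add: exp_double[symmetric] algebra_simps)
    ultimately show ?thesis by (simp add: power_mult_distrib mult_mono)
  qed
  finally have "(norm (r T))\<^sup>2 \<le> ((norm (r 0) + E) * exp ((M + 1) * T))\<^sup>2"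
    by (smt (verit) zero_le_power2)
  then show ?thesis by (rule power2_le_imp_le) (use E in simp)
qed

section \<open>Linear differential equations on the half line\<close>

lemma at_within_nonneg:
  fixes t T :: real
  assumes "0 \<le> t" "t < T"
  shows "at t within {0..T} = at t within {0..}"
  by (rule at_within_nhd[where S="{t - 1 <..< T}"]) (use assms in auto)

lemma integral_has_vector_derivative_nonneg:
  fixes g :: "real \<Rightarrow> 'x::euclidean_space"
  assumes g: "continuous_on {0..} g" and t: "t \<ge> 0"
  shows "((\<lambda>t. integral {0..t} g) has_vector_derivative g t) (at t within {0..})"
proof -
  have "continuous_on {0..t+1} g" by (rule continuous_on_subset[OF g]) auto
  from integral_has_vector_derivative[OF this, of t]
  show ?thesis using at_within_nonneg[of t "t+1"] t by simp
qed

lemma vector_derivative_imp_continuous_nonneg: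
  assumes "\<And>t. t \<ge> 0 \<Longrightarrow> (w has_vector_derivative w' t) (at t within {0..})"
  shows "continuous_on {0..} w"
  unfolding continuous_on_eq_continuous_within
  using assms has_vector_derivative_continuous by fastforce

lemma continuous_on_nonneg_if_bounded_intervals:
  assumes "\<And>T. T \<ge> 0 \<Longrightarrow> continuous_on {0..T} f"
  shows "continuous_on {0..} (f :: real \<Rightarrow> 'x::topological_space)"
  unfolding continuous_on_eq_continuous_within
proof
  fix x :: real assume x: "x \<in> {0..}"
  have "continuous (at x within {0..x+1}) f"
    using assms[of "x+1"] x by (auto simp: continuous_on_eq_continuous_within)
  then show "continuous (at x within {0..}) f"
    using at_within_nonneg[of x "x+1"] x by simp
qed

lemma has_integral_monomial:
  fixes c t :: real
  assumes "t \<ge> 0"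
  shows "((\<lambda>s. c * s ^ k) has_integral (c * t ^ Suc k / real (Suc k))) {0..t}"
proof -
  have "((\<lambda>s. c * s ^ k) has_integral
          ((\<lambda>s. c * s ^ Suc k / real (Suc k)) t - (\<lambda>s. c * s ^ Suc k / real (Suc k)) 0)) {0..t}"
  proof (rule fundamental_theorem_of_calculus[OF assms])
    fix x assume "x \<in> {0..t}"
    have "((\<lambda>s. s ^ Suc k) has_real_derivative real (Suc k) * x ^ k) (at x within {0..t})"
      using DERIV_pow[of "Suc k" x] by (simp add: has_field_derivative_at_within del: of_nat_Suc)
    from DERIV_cdivide[OF DERIV_cmult[OF this, of c], of "real (Suc k)"]
    have "((\<lambda>s. c * s ^ Suc k / real (Suc k)) has_real_derivative c * x ^ k) (at x within {0..t})"
      by (simp del: of_nat_Suc)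
    then show "((\<lambda>s. c * s ^ Suc k / real (Suc k)) has_vector_derivative c * x ^ k) (at x within {0..t})"
      by (simp add: has_real_derivative_iff_has_vector_derivative)
  qed
  then show ?thesis by simp
qed

locale linear_ode =
  fixes A :: "real \<Rightarrow> 'x::euclidean_space \<Rightarrow> 'x"
  assumes lin: "\<And>t. linear (A t)"
    and cont: "\<And>w. continuous_on {0..} w \<Longrightarrow> continuous_on {0..} (\<lambda>s. A s (w s))"
    and bnd: "\<And>T. \<exists>M\<ge>0. \<forall>t\<in>{0..T}. \<forall>v. norm (A t v) \<le> M * norm v"
begin

primrec picard_term :: "'x \<Rightarrow> nat \<Rightarrow> real \<Rightarrow> 'x" where
  "picard_term v 0 = (\<lambda>t. v)"
| "picard_term v (Suc k) = (\<lambda>t. integral {0..t} (\<lambda>s. A s (picard_term v k s)))"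

definition picard_solution :: "'x \<Rightarrow> real \<Rightarrow> 'x" where
  "picard_solution v t = (\<Sum>k. picard_term v k t)"

lemma picard_term_continuous: "continuous_on {0..} (picard_term v k)"
proof (induction k)
  case (Suc k)
  show ?case
    by (simp, rule vector_derivative_imp_continuous_nonneg,
        rule integral_has_vector_derivative_nonneg, rule cont[OF Suc]) simp
qed simp

lemma picard_term_bound:
  assumes M0: "M \<ge> 0" and M: "\<forall>t\<in>{0..T}. \<forall>v. norm (A t v) \<le> M * norm v"
    and t: "t \<in> {0..T}"
  shows "norm (picard_term v k t) \<le> norm v * (M * t) ^ k / fact k"
  using t
proof (induction k arbitrary: t)
  case (Suc k)
  let ?c = "norm v * M ^ Suc k / fact k"
  have hi: "((\<lambda>s. ?c * s ^ k) has_integral (?c * t ^ Suc k / real (Suc k))) {0..t}"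
    by (rule has_integral_monomial) (use Suc in auto)
  have "norm (integral {0..t} (\<lambda>s. A s (picard_term v k s))) \<le> integral {0..t} (\<lambda>s. ?c * s ^ k)"
  proof (rule integral_norm_bound_integral)
    show "(\<lambda>s. A s (picard_term v k s)) integrable_on {0..t}"
      by (intro integrable_continuous_interval continuous_on_subset[OF cont[OF picard_term_continuous]])
         auto
    show "(\<lambda>s. ?c * s ^ k) integrable_on {0..t}" using hi by blast
    fix s assume s: "s \<in> {0..t}"
    then have sT: "s \<in> {0..T}" using Suc by auto
    have "norm (A s (picard_term v k s)) \<le> M * norm (picard_term v k s)" using M sT by blast
    also have "\<dots> \<le> M * (norm v * (M * s) ^ k / fact k)"
      using Suc.IH[OF sT] M0 by (intro mult_left_mono) auto
    also have "\<dots> = ?c * s ^ k" by (simp add: power_mult_distrib field_simps)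
    finally show "norm (A s (picard_term v k s)) \<le> ?c * s ^ k" .
  qed
  also have "\<dots> = norm v * (M * t) ^ Suc k / fact (Suc k)"
    using integral_unique[OF hi] by (simp add: power_mult_distrib field_simps del: of_nat_Suc)
  finally show ?case by simp
qed simp

lemma picard_uniform_limit:
  assumes T: "T \<ge> 0"
  shows "uniform_limit {0..T} (\<lambda>n t. \<Sum>k<n. picard_term v k t) (picard_solution v) sequentially"
proof -
  obtain M where M0: "M \<ge> 0" and M: "\<forall>t\<in>{0..T}. \<forall>v. norm (A t v) \<le> M * norm v"
    using bnd by blast
  show ?thesis unfolding picard_solution_def[abs_def]
  proof (rule Weierstrass_m_test)
    fix n t assume t: "t \<in> {0..T}"
    have "norm (picard_term v n t) \<le> norm v * (M * t) ^ n / fact n"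
      by (rule picard_term_bound[OF M0 M t])
    also have "\<dots> \<le> norm v * (M * T) ^ n / fact n"
      using t M0 by (intro divide_right_mono mult_left_mono power_mono) auto
    finally show "norm (picard_term v n t) \<le> norm v * (M * T) ^ n / fact n" .
  next
    show "summable (\<lambda>n. norm v * (M * T) ^ n / fact n)"
      using summable_mult[OF summable_exp[of "M * T"], of "norm v"] by (simp add: field_simps)
  qed
qed

lemma picard_solution_continuous: "continuous_on {0..} (picard_solution v)"
proof (rule continuous_on_nonneg_if_bounded_intervals)
  fix T :: real assume "T \<ge> 0"
  show "continuous_on {0..T} (picard_solution v)"
    by (rule uniform_limit_theorem[OF _ picard_uniform_limit[OF \<open>T \<ge> 0\<close>]])
       (auto intro!: always_eventually continuous_on_subset[OF continuous_on_sum]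
         picard_term_continuous)
qed

lemma uniform_limit_apply:
  assumes lim: "uniform_limit {0..T} F w sequentially"
  shows "uniform_limit {0..T} (\<lambda>n s. A s (F n s)) (\<lambda>s. A s (w s)) sequentially"
  unfolding uniform_limit_iff
proof (intro allI impI)
  fix e :: real assume e: "e > 0"
  obtain M where M0: "M \<ge> 0" and M: "\<forall>s\<in>{0..T}. \<forall>v. norm (A s v) \<le> M * norm v"
    using bnd by blast
  have "\<forall>\<^sub>F n in sequentially. \<forall>s\<in>{0..T}. dist (F n s) (w s) < e / (M + 1)"
    using lim e M0 unfolding uniform_limit_iff by auto
  then show "\<forall>\<^sub>F n in sequentially. \<forall>s\<in>{0..T}. dist (A s (F n s)) (A s (w s)) < e"
  proof (rule eventually_mono, intro ballI)
    fix n s assume close: "\<forall>s\<in>{0..T}. dist (F n s) (w s) < e / (M + 1)" and s: "s \<in> {0..T}"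
    have "dist (A s (F n s)) (A s (w s)) = norm (A s (F n s - w s))"
      by (simp add: dist_norm linear_diff[OF lin])
    also have "\<dots> \<le> M * norm (F n s - w s)" using M s by blast
    also have "\<dots> \<le> M * (e / (M + 1))"
      using close s M0 by (intro mult_left_mono) (auto simp: dist_norm less_imp_le)
    also have "\<dots> < e" using e M0 by (simp add: field_simps)
    finally show "dist (A s (F n s)) (A s (w s)) < e" .
  qed
qed

lemma picard_integral_equation:
  assumes t: "t \<ge> 0"
  shows "picard_solution v t = v + integral {0..t} (\<lambda>s. A s (picard_solution v s))"
proof -
  let ?S = "\<lambda>n s. \<Sum>k<n. picard_term v k s"
  have partial: "?S (Suc n) t = v + integral {0..t} (\<lambda>s. A s (?S n s))" for n
  proof -
    have "?S (Suc n) t = v + (\<Sum>k<n. integral {0..t} (\<lambda>s. A s (picard_term v k s)))"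
      unfolding sum.lessThan_Suc_shift by simp
    also have "(\<Sum>k<n. integral {0..t} (\<lambda>s. A s (picard_term v k s)))
             = integral {0..t} (\<lambda>s. \<Sum>k<n. A s (picard_term v k s))"
      by (rule integral_sum[symmetric]) (auto intro!: integrable_continuous_interval
          continuous_on_subset[OF cont[OF picard_term_continuous]])
    finally show ?thesis by (simp add: linear_sum[OF lin] o_def)
  qed
  have conv: "(\<lambda>n. ?S (Suc n) t) \<longlonglongrightarrow> picard_solution v t"
    using LIMSEQ_Suc[OF tendsto_uniform_limitI[OF picard_uniform_limit[OF t], of t]] t
    by (simp del: sum.lessThan_Suc)
  obtain I J where I: "\<And>n. ((\<lambda>s. A s (?S n s)) has_integral I n) {0..t}"
    and J: "((\<lambda>s. A s (picard_solution v s)) has_integral J) {0..t}" and IJ: "I \<longlonglongrightarrow> J"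
    by (rule uniform_limit_integral[OF uniform_limit_apply[OF picard_uniform_limit[OF t]]])
       (auto intro!: continuous_on_subset[OF cont] continuous_on_sum picard_term_continuous)
  have "(\<lambda>n. ?S (Suc n) t) \<longlonglongrightarrow> v + J"
    unfolding partial integral_unique[OF I] using IJ by (intro tendsto_intros)
  with conv have "picard_solution v t = v + J" by (rule LIMSEQ_unique)
  then show ?thesis using J by (simp add: integral_unique)
qed

text \<open>Existence: differentiating the integral equation.\<close>
lemma linear_ode_exists:
  "\<exists>w. w 0 = v \<and> (\<forall>t\<ge>0. (w has_vector_derivative A t (w t)) (at t within {0..}))"
proof (intro exI conjI allI impI)
  show "picard_solution v 0 = v" using picard_integral_equation[of 0] by simp
  fix t :: real assume t: "t \<ge> 0"
  have "((\<lambda>t. v + integral {0..t} (\<lambda>s. A s (picard_solution v s))) has_vector_derivative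
          A t (picard_solution v t)) (at t within {0..})"
    using integral_has_vector_derivative_nonneg[OF cont[OF picard_solution_continuous] t]
    by (auto intro!: derivative_eq_intros)
  then show "(picard_solution v has_vector_derivative A t (picard_solution v t)) (at t within {0..})"
    by (rule has_vector_derivative_transform[rotated 2]) (use t picard_integral_equation in auto)
qed

text \<open>Uniqueness: a solution starting at \<open>0\<close> vanishes, by the growth bound with \<open>E = 0\<close>.\<close>
lemma linear_ode_zero:
  assumes d: "\<And>t. t \<ge> 0 \<Longrightarrow> (u has_vector_derivative A t (u t)) (at t within {0..})"
    and u0: "u 0 = 0" and t: "t \<ge> 0"
  shows "u t = 0"
proof -
  obtain M where M0: "M \<ge> 0" and M: "\<forall>s\<in>{0..t}. \<forall>v. norm (A s v) \<le> M * norm v"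
    using bnd by blast
  have "norm (u t) \<le> (norm (u 0) + 0) * exp ((M + 1) * t)"
    by (rule affine_growth_bound[OF d _ M0 order_refl t]) (use M in auto)
  then show ?thesis using u0 by simp
qed

end

section \<open>The cone form and the linearised vector field\<close>

text \<open>The quadratic form \<open>L(v, 0) = |a|\<^sup>2 - |z|\<^sup>2\<close> for \<open>v = (a, z)\<close>; \<open>L(v, 0) > 0\<close> means that \<open>v\<close>
  lies strictly inside the cone around the \<open>a\<close>-axis.\<close>
definition cone_form :: "('a::real_normed_vector \<times> 'b::real_normed_vector) \<Rightarrow> real" where
  "cone_form v = (norm (fst v))\<^sup>2 - (norm (snd v))\<^sup>2"

lemma Lfun_zero: "Lfun w 0 = cone_form w"
  by (simp add: Lfun_def cone_form_def)

lemma cone_form_nonpos_iff: "cone_form v \<le> 0 \<longleftrightarrow> norm (fst v) \<le> norm (snd v)"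
  unfolding cone_form_def by (simp add: abs_le_square_iff[symmetric])

lemma cone_form_pos_imp:
  assumes "cone_form v > 0"
  shows "norm (snd v) \<le> norm (fst v)" "norm (fst v) > 0"
proof -
  have "(norm (snd v))\<^sup>2 < (norm (fst v))\<^sup>2" using assms by (simp add: cone_form_def)
  then show "norm (snd v) \<le> norm (fst v)" by (simp add: power_less_imp_less_base less_imp_le)
  then show "norm (fst v) > 0"
    using \<open>(norm (snd v))\<^sup>2 < (norm (fst v))\<^sup>2\<close> by (cases "norm (fst v) = 0") auto
qed

lemma cone_form_scaleR: "cone_form (c *\<^sub>R v) = c\<^sup>2 * cone_form v"
  by (simp add: cone_form_def power_mult_distrib algebra_simps)

lemma continuous_cone_form: "isCont cone_form v"
  unfolding cone_form_def[abs_def] by (intro continuous_intros)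

lemma has_vector_derivative_fst_snd:
  assumes "(w has_vector_derivative w') F"
  shows "((\<lambda>t. fst (w t)) has_vector_derivative fst w') F"
    and "((\<lambda>t. snd (w t)) has_vector_derivative snd w') F"
  using has_derivative_fst[OF assms[unfolded has_vector_derivative_def]]
    has_derivative_snd[OF assms[unfolded has_vector_derivative_def]]
  by (simp_all add: has_vector_derivative_def)

lemma cone_form_deriv:
  fixes w :: "real \<Rightarrow> 'a::real_inner \<times> 'b::real_inner"
  assumes "(w has_vector_derivative w') (at t within S)"
  shows "((\<lambda>t. cone_form (w t)) has_real_derivative
            2 * inner (fst (w t)) (fst w') - 2 * inner (snd (w t)) (snd w')) (at t within S)"
  unfolding cone_form_def
  using DERIV_diff[OF norm_squared_deriv[OF has_vector_derivative_fst_snd(1)[OF assms]]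
      norm_squared_deriv[OF has_vector_derivative_fst_snd(2)[OF assms]]]
  by simp

lemma DFapp_linear: "linear (DFapp f' g' y)"
  unfolding DFapp_def by (intro linearI) (auto simp: blinfun.add_right blinfun.scaleR_right)

lemma DFapp_bounded_linear: "bounded_linear (DFapp f' g' y)"
  unfolding DFapp_def[abs_def] by (intro bounded_linear_Pair blinfun.bounded_linear_right)

lemma DFapp_bound: "norm (DFapp f' g' y v) \<le> (norm (f' y) + norm (g' y)) * norm v"
proof -
  have "norm (DFapp f' g' y v) \<le> norm (f' y v) + norm (g' y v)"
    unfolding DFapp_def by (rule norm_Pair_le)
  also have "\<dots> \<le> norm (f' y) * norm v + norm (g' y) * norm v"
    by (intro add_mono norm_blinfun)
  finally show ?thesis by (simp add: algebra_simps)
qed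

lemma DFapp_diff_bound:
  "norm (DFapp f' g' p v - DFapp f' g' q v) \<le> (norm (f' p - f' q) + norm (g' p - g' q)) * norm v"
proof -
  have "DFapp f' g' p v - DFapp f' g' q v = (blinfun_apply (f' p - f' q) v, blinfun_apply (g' p - g' q) v)"
    by (simp add: DFapp_def blinfun.diff_left)
  also have "norm \<dots> \<le> norm (f' p - f' q) * norm v + norm (g' p - g' q) * norm v"
    by (rule order_trans[OF norm_Pair_le]) (intro add_mono norm_blinfun)
  finally show ?thesis by (simp add: algebra_simps)
qed

lemma bounded_linear_partial_snd: "bounded_linear (\<lambda>z. blinfun_apply F (0, z))"
  by (rule bounded_linear_compose[OF blinfun.bounded_linear_right])
     (intro bounded_linear_Pair bounded_linear_zero bounded_linear_ident)

lemma bounded_linear_partial_fst: "bounded_linear (\<lambda>a. blinfun_apply F (a, 0))"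
  by (rule bounded_linear_compose[OF blinfun.bounded_linear_right])
     (intro bounded_linear_Pair bounded_linear_zero bounded_linear_ident)

lemma blinfun_apply_split: "blinfun_apply F (a, z) = blinfun_apply F (a, 0) + blinfun_apply F (0, z)"
  using blinfun.add_right[of F "(a, 0)" "(0, z)"] by simp

lemma mult_norm_le_square:
  fixes x y :: real
  assumes "c \<ge> 0" "0 \<le> y" "y \<le> x"
  shows "c * x * y \<le> c * x\<^sup>2"
proof -
  have "x * y \<le> x * x" using assms by (intro mult_left_mono) auto
  from mult_left_mono[OF this assms(1)] show ?thesis by (simp add: power2_eq_square mult.assoc)
qed

section \<open>A sequential criterion for differentiability\<close>

lemma derivative_violation_sequence:
  fixes h :: "'b::real_normed_vector \<Rightarrow> 'a::real_normed_vector"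
  assumes lin: "linear H" and r: "r > 0"
    and fail: "\<not> (\<exists>d>0. \<forall>y. norm (y - z0) < d \<longrightarrow> norm (h y - h z0 - H (y - z0)) \<le> e * norm (y - z0))"
  obtains Y where "\<And>n. Y n \<in> ball z0 r" "\<And>n. Y n \<noteq> z0" "Y \<longlonglongrightarrow> z0"
    "\<And>n. e * norm (Y n - z0) < norm (h (Y n) - h z0 - H (Y n - z0))"
proof -
  have all: "\<forall>d>0. \<exists>y. norm (y - z0) < d \<and> e * norm (y - z0) < norm (h y - h z0 - H (y - z0))"
    using fail by (auto simp: not_le)
  have "\<forall>n. \<exists>y. norm (y - z0) < min r (1 / real (Suc n)) \<and> e * norm (y - z0) < norm (h y - h z0 - H (y - z0))"
  proof
    fix n
    have "min r (1 / real (Suc n)) > 0" using r by simp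
    then show "\<exists>y. norm (y - z0) < min r (1 / real (Suc n)) \<and> e * norm (y - z0) < norm (h y - h z0 - H (y - z0))"
      using all by blast
  qed
  then obtain Y where "\<forall>n. norm (Y n - z0) < min r (1 / real (Suc n))
                        \<and> e * norm (Y n - z0) < norm (h (Y n) - h z0 - H (Y n - z0))"
    by (auto dest!: choice)
  then have Y: "\<And>n. norm (Y n - z0) < min r (1 / real (Suc n))"
    and far: "\<And>n. e * norm (Y n - z0) < norm (h (Y n) - h z0 - H (Y n - z0))"
    by auto
  show ?thesis
  proof (rule that[OF _ _ _ far])
    show "Y n \<in> ball z0 r" for n using Y[of n] by (simp add: dist_norm norm_minus_commute)
    show "Y n \<noteq> z0" for n using far[of n] by (auto simp: linear_0[OF lin])
    show "Y \<longlonglongrightarrow> z0"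
    proof (rule tendsto_sandwich[where f="\<lambda>n. 0" and h="\<lambda>n. inverse (real (Suc n))",
          THEN tendsto_norm_zero_cancel[of "\<lambda>n. Y n - z0", unfolded LIM_zero_iff]])
      show "\<forall>\<^sub>F n in sequentially. norm (Y n - z0) \<le> inverse (real (Suc n))"
        using Y by (simp add: less_imp_le inverse_eq_divide)
    qed (use LIMSEQ_inverse_real_of_nat in auto)
  qed
qed

text \<open>A map that is Lipschitz at \<open>z\<^sub>0\<close> is differentiable there with derivative \<open>H\<close> as soon as every
  limit \<open>(u, a)\<close> of normalised difference quotients \<open>((y - z\<^sub>0)/|y - z\<^sub>0|, (h y - h z\<^sub>0)/|y - z\<^sub>0|)\<close>
  along sequences \<open>y \<rightarrow> z\<^sub>0\<close> satisfies \<open>a = H u\<close>: otherwise the difference quotients along a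
  violating sequence stay away from the graph of \<open>H\<close>, yet by compactness a subsequence converges.\<close>
lemma has_derivative_sequential_criterion:
  fixes h :: "'b::euclidean_space \<Rightarrow> 'a::euclidean_space"
  assumes lin: "linear H" and r: "r > 0"
    and lip: "\<And>y. y \<in> ball z0 r \<Longrightarrow> norm (h y - h z0) \<le> L * norm (y - z0)"
    and limits: "\<And>Y u a. (\<And>n. Y n \<in> ball z0 r \<and> Y n \<noteq> z0) \<Longrightarrow> Y \<longlonglongrightarrow> z0
        \<Longrightarrow> (\<lambda>n. (1 / norm (Y n - z0)) *\<^sub>R (Y n - z0)) \<longlonglongrightarrow> u
        \<Longrightarrow> (\<lambda>n. (1 / norm (Y n - z0)) *\<^sub>R (h (Y n) - h z0)) \<longlonglongrightarrow> a \<Longrightarrow> a = H u"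
  shows "(h has_derivative H) (at z0)"
proof -
  have blH: "bounded_linear H" using lin linear_conv_bounded_linear by blast
  have "\<exists>d>0. \<forall>y. norm (y - z0) < d \<longrightarrow> norm (h y - h z0 - H (y - z0)) \<le> e * norm (y - z0)"
    if e: "e > 0" for e
  proof (rule ccontr)
    assume "\<not> ?thesis"
    then obtain Y where Yball: "\<And>n. Y n \<in> ball z0 r" and Yz0: "\<And>n. Y n \<noteq> z0" and "Y \<longlonglongrightarrow> z0"
      and far: "\<And>n. e * norm (Y n - z0) < norm (h (Y n) - h z0 - H (Y n - z0))"
      using derivative_violation_sequence[OF lin r] by blast
    define u where "u n = (1 / norm (Y n - z0)) *\<^sub>R (Y n - z0)" for n
    define a where "a n = (1 / norm (Y n - z0)) *\<^sub>R (h (Y n) - h z0)" for n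
    have "\<forall>n. (u n, a n) \<in> cball 0 (1 + \<bar>L\<bar>)"
    proof
      fix n
      have "norm (a n) \<le> L" using lip[OF Yball] Yz0[of n] unfolding a_def by (simp add: divide_le_eq)
      moreover have "norm (u n) = 1" using Yz0[of n] unfolding u_def by simp
      ultimately show "(u n, a n) \<in> cball 0 (1 + \<bar>L\<bar>)" using norm_Pair_le[of "u n" "a n"] by simp
    qed
    with compact_imp_seq_compact[OF compact_cball]
    obtain l s where s: "strict_mono s" and lim: "((\<lambda>n. (u n, a n)) \<circ> s) \<longlonglongrightarrow> l"
      by (rule seq_compactE)
    have ulim: "(\<lambda>n. u (s n)) \<longlonglongrightarrow> fst l" and alim: "(\<lambda>n. a (s n)) \<longlonglongrightarrow> snd l"
      using tendsto_fst[OF lim] tendsto_snd[OF lim] by (simp_all add: o_def)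
    have "snd l = H (fst l)"
      using limits[of "Y \<circ> s"] Yball Yz0 LIMSEQ_subseq_LIMSEQ[OF \<open>Y \<longlonglongrightarrow> z0\<close> s] ulim alim
      unfolding u_def a_def by (simp add: o_def)
    then have "(\<lambda>n. a (s n) - H (u (s n))) \<longlonglongrightarrow> 0"
      using tendsto_diff[OF alim bounded_linear.tendsto[OF blH ulim]] by simp
    from LIMSEQ_D[OF this e] obtain N where "norm (a (s N) - H (u (s N))) < e"
      by (metis diff_zero order_refl)
    moreover have "norm (a n - H (u n)) > e" for n
    proof -
      have "a n - H (u n) = (1 / norm (Y n - z0)) *\<^sub>R (h (Y n) - h z0 - H (Y n - z0))"
        unfolding a_def u_def by (simp add: linear_scale[OF lin] linear_diff[OF lin] scaleR_diff_right)
      then show ?thesis using far[of n] Yz0[of n] by (simp add: pos_less_divide_eq mult.commute)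
    qed
    ultimately show False by (meson less_asym)
  qed
  then show ?thesis unfolding has_derivative_at_alt using blH by blast
qed

locale invariant_graph =
  fixes f :: "'a::euclidean_space \<times> 'b::euclidean_space \<Rightarrow> 'a"
    and g :: "'a \<times> 'b \<Rightarrow> 'b"
    and f' :: "'a \<times> 'b \<Rightarrow> ('a \<times> 'b) \<Rightarrow>\<^sub>L 'a"
    and g' :: "'a \<times> 'b \<Rightarrow> ('a \<times> 'b) \<Rightarrow>\<^sub>L 'b"
    and U \<Gamma> :: "('a \<times> 'b) set"
    and Phi :: "real \<Rightarrow> 'a \<times> 'b \<Rightarrow> 'a \<times> 'b"
    and alpha ell :: "'a \<times> 'b \<Rightarrow> real"
    and d c1 :: real
    and h :: "'b \<Rightarrow> 'a"
  assumes H1_open: "open U" and H1_convex: "convex U" and H1_d: "d > 0"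
    and H1_cone: "\<forall>x\<in>U. Ccone x \<inter> U \<subseteq> Bbox d x"
    and H2_f: "\<forall>x\<in>U. (f has_derivative blinfun_apply (f' x)) (at x)"
    and H2_g: "\<forall>x\<in>U. (g has_derivative blinfun_apply (g' x)) (at x)"
    and H2_fcont: "continuous_on U f'" and H2_gcont: "continuous_on U g'"
    and H2_alpha: "continuous_on U alpha" "\<forall>x\<in>U. alpha x > 0"
    and H2_ell: "continuous_on U ell" "\<forall>x\<in>U. ell x \<ge> 0"
    and H2_c1: "c1 > 0"
    and H2_a: "\<forall>x\<in>U. \<forall>a'. inner a' (blinfun_apply (f' x) (a', 0)) \<ge> alpha x * (norm a')^2"
    and H2_z: "\<forall>x\<in>U. \<forall>z'. inner z' (blinfun_apply (g' x) (0, z')) \<le> ell x * (norm z')^2"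
    and H2_dom: "\<forall>x\<in>U. alpha x \<ge> ell x + onorm (\<lambda>z'. blinfun_apply (f' x) (0, z'))
                                  + onorm (\<lambda>a'. blinfun_apply (g' x) (a', 0)) + c1"
    and H3_sub: "\<Gamma> \<subseteq> U"
    and H3_flow: "\<forall>x\<in>\<Gamma>. Phi 0 x = x \<and>
        (\<forall>t\<ge>0. ((\<lambda>s. Phi s x) has_vector_derivative (f (Phi t x), g (Phi t x))) (at t within {0..})
               \<and> Phi t x \<in> \<Gamma>)"
    and H3_proj: "snd ` \<Gamma> = snd ` U"
    and h_graph: "\<Gamma> = {(h z, z) | z. z \<in> snd ` U}"
begin

definition norm_Dzf :: "'a \<times> 'b \<Rightarrow> real" where
  "norm_Dzf x = onorm (\<lambda>z'. blinfun_apply (f' x) (0::'a, z'))"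

definition norm_Dag :: "'a \<times> 'b \<Rightarrow> real" where
  "norm_Dag x = onorm (\<lambda>a'. blinfun_apply (g' x) (a', 0::'b))"

lemma norm_Dzf_nonneg: "norm_Dzf x \<ge> 0"
  unfolding norm_Dzf_def by (rule onorm_pos_le[OF bounded_linear_partial_snd])

lemma norm_Dag_nonneg: "norm_Dag x \<ge> 0"
  unfolding norm_Dag_def by (rule onorm_pos_le[OF bounded_linear_partial_fst])

lemma dominance: "p \<in> U \<Longrightarrow> alpha p \<ge> ell p + norm_Dzf p + norm_Dag p + c1"
  using H2_dom unfolding norm_Dzf_def norm_Dag_def by blast

lemma expansion_lower:
  assumes p: "p \<in> U"
  shows "inner ua (blinfun_apply (f' p) (ua, uz)) \<ge> alpha p * (norm ua)\<^sup>2 - norm_Dzf p * norm ua * norm uz"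
proof -
  have "\<bar>inner ua (blinfun_apply (f' p) (0, uz))\<bar> \<le> norm ua * norm (blinfun_apply (f' p) (0, uz))"
    by (rule Cauchy_Schwarz_ineq2)
  also have "\<dots> \<le> norm ua * (norm_Dzf p * norm uz)"
    unfolding norm_Dzf_def by (intro mult_left_mono onorm[OF bounded_linear_partial_snd]) auto
  finally have "inner ua (blinfun_apply (f' p) (0, uz)) \<ge> - (norm_Dzf p * norm ua * norm uz)"
    by (simp add: mult_ac)
  moreover have "inner ua (blinfun_apply (f' p) (ua, 0)) \<ge> alpha p * (norm ua)\<^sup>2"
    using H2_a p by blast
  ultimately show ?thesis by (subst blinfun_apply_split) (simp add: inner_add_right)
qed

lemma contraction_upper:
  assumes p: "p \<in> U"
  shows "inner uz (blinfun_apply (g' p) (ua, uz)) \<le> ell p * (norm uz)\<^sup>2 + norm_Dag p * norm ua * norm uz"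
proof -
  have "\<bar>inner uz (blinfun_apply (g' p) (ua, 0))\<bar> \<le> norm uz * norm (blinfun_apply (g' p) (ua, 0))"
    by (rule Cauchy_Schwarz_ineq2)
  also have "\<dots> \<le> norm uz * (norm_Dag p * norm ua)"
    unfolding norm_Dag_def by (intro mult_left_mono onorm[OF bounded_linear_partial_fst]) auto
  finally have "inner uz (blinfun_apply (g' p) (ua, 0)) \<le> norm_Dag p * norm ua * norm uz"
    by (simp add: mult_ac)
  moreover have "inner uz (blinfun_apply (g' p) (0, uz)) \<le> ell p * (norm uz)\<^sup>2"
    using H2_z p by blast
  ultimately show ?thesis by (subst blinfun_apply_split) (simp add: inner_add_right)
qed

lemma cone_form_growth:
  assumes p: "p \<in> U" and c: "norm uz \<le> norm ua"
  shows "inner ua (blinfun_apply (f' p) (ua, uz)) - inner uz (blinfun_apply (g' p) (ua, uz))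
           \<ge> c1 * (norm ua)\<^sup>2"
proof -
  have "norm_Dzf p * norm ua * norm uz \<le> norm_Dzf p * (norm ua)\<^sup>2"
    using c by (intro mult_norm_le_square norm_Dzf_nonneg norm_ge_zero)
  moreover have "norm_Dag p * norm ua * norm uz \<le> norm_Dag p * (norm ua)\<^sup>2"
    using c by (intro mult_norm_le_square norm_Dag_nonneg norm_ge_zero)
  moreover have "ell p * (norm uz)\<^sup>2 \<le> ell p * (norm ua)\<^sup>2"
    using c H2_ell(2) p by (intro mult_left_mono power_mono) auto
  moreover have "(ell p + norm_Dzf p + norm_Dag p + c1) * (norm ua)\<^sup>2 \<le> alpha p * (norm ua)\<^sup>2"
    using dominance[OF p] by (intro mult_right_mono) auto
  ultimately show ?thesis
    using expansion_lower[OF p, of ua uz] contraction_upper[OF p, of uz ua]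
    by (simp add: distrib_right)
qed

lemma cone_expansion:
  assumes p: "p \<in> U" and c: "norm uz \<le> norm ua"
  shows "inner ua (blinfun_apply (f' p) (ua, uz)) \<ge> (alpha p - norm_Dzf p) * (norm ua)\<^sup>2"
  using expansion_lower[OF p, of ua uz]
    mult_norm_le_square[OF norm_Dzf_nonneg norm_ge_zero c, of p]
  by (simp add: left_diff_distrib)

lemma noncone_contraction:
  assumes p: "p \<in> U" and c: "norm ua \<le> norm uz"
  shows "inner uz (blinfun_apply (g' p) (ua, uz)) \<le> (alpha p - norm_Dzf p - c1) * (norm uz)\<^sup>2"
proof -
  have "norm_Dag p * norm uz * norm ua \<le> norm_Dag p * (norm uz)\<^sup>2"
    using c by (intro mult_norm_le_square norm_Dag_nonneg norm_ge_zero)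
  moreover have "(ell p + norm_Dag p) * (norm uz)\<^sup>2 \<le> (alpha p - norm_Dzf p - c1) * (norm uz)\<^sup>2"
    using dominance[OF p] by (intro mult_right_mono) auto
  ultimately show ?thesis using contraction_upper[OF p, of uz ua]
    by (simp add: distrib_right mult_ac)
qed

lemma Gamma_U: "x \<in> \<Gamma> \<Longrightarrow> x \<in> U" using H3_sub by auto

lemma flow0: "x \<in> \<Gamma> \<Longrightarrow> Phi 0 x = x" using H3_flow by blast

lemma flow_in: "x \<in> \<Gamma> \<Longrightarrow> t \<ge> 0 \<Longrightarrow> Phi t x \<in> \<Gamma>" using H3_flow by blast

lemma flow_U: "x \<in> \<Gamma> \<Longrightarrow> t \<ge> 0 \<Longrightarrow> Phi t x \<in> U" using flow_in Gamma_U by blast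

lemma flow_deriv: "x \<in> \<Gamma> \<Longrightarrow> t \<ge> 0 \<Longrightarrow>
   ((\<lambda>s. Phi s x) has_vector_derivative (f (Phi t x), g (Phi t x))) (at t within {0..})"
  using H3_flow by blast

lemma flow_continuous: "x \<in> \<Gamma> \<Longrightarrow> continuous_on {0..} (\<lambda>s. Phi s x)"
  by (rule vector_derivative_imp_continuous_nonneg[OF flow_deriv])

lemma F_has_derivative: "p \<in> U \<Longrightarrow> ((\<lambda>u. (f u, g u)) has_derivative DFapp f' g' p) (at p within S)"
  unfolding DFapp_def[abs_def] using H2_f H2_g
  by (intro has_derivative_Pair) (auto intro: has_derivative_at_withinI)

lemma DF_bounded_on_compact:
  assumes N: "compact N" "N \<subseteq> U"
  shows "\<exists>M\<ge>0. \<forall>p\<in>N. norm (f' p) + norm (g' p) \<le> M"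
proof -
  have "continuous_on N (\<lambda>p. norm (f' p) + norm (g' p))"
    using N(2) by (intro continuous_intros continuous_on_subset[OF H2_fcont]
        continuous_on_subset[OF H2_gcont])
  then have "compact ((\<lambda>p. norm (f' p) + norm (g' p)) ` N)"
    using N(1) by (rule compact_continuous_image)
  then obtain B where "\<forall>p\<in>N. norm (f' p) + norm (g' p) \<le> B"
    using compact_imp_bounded bounded_real by (metis (no_types, lifting) abs_le_D1 imageI)
  then show ?thesis by (intro exI[of _ "max B 0"]) auto
qed

lemma DF_uniformly_continuous_on_compact:
  assumes N: "compact N" "N \<subseteq> U" and \<epsilon>: "\<epsilon> > 0"
  shows "\<exists>\<eta>>0. \<forall>p\<in>N. \<forall>q\<in>N. dist q p < \<eta> \<longrightarrow> norm (f' q - f' p) + norm (g' q - g' p) \<le> \<epsilon>"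
proof -
  obtain \<eta>1 where "\<eta>1 > 0" and u1: "\<forall>p\<in>N. \<forall>q\<in>N. dist q p < \<eta>1 \<longrightarrow> dist (f' q) (f' p) < \<epsilon> / 2"
    using compact_uniformly_continuous[OF continuous_on_subset[OF H2_fcont N(2)] N(1)] \<epsilon>
    unfolding uniformly_continuous_on_def by (meson half_gt_zero)
  obtain \<eta>2 where "\<eta>2 > 0" and u2: "\<forall>p\<in>N. \<forall>q\<in>N. dist q p < \<eta>2 \<longrightarrow> dist (g' q) (g' p) < \<epsilon> / 2"
    using compact_uniformly_continuous[OF continuous_on_subset[OF H2_gcont N(2)] N(1)] \<epsilon>
    unfolding uniformly_continuous_on_def by (meson half_gt_zero)
  show ?thesis
    using u1 u2 \<open>\<eta>1 > 0\<close> \<open>\<eta>2 > 0\<close> by (intro exI[of _ "min \<eta>1 \<eta>2"]) (force simp: dist_norm)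
qed

lemma graph_Gamma: "z \<in> snd ` U \<Longrightarrow> (h z, z) \<in> \<Gamma>"
  using h_graph by auto

text \<open>Mean value estimate: the secant of \<open>F\<close> between two points of \<open>U\<close> whose difference lies in
  the cone increases \<open>L\<close> just as the linearisation does.\<close>
lemma secant_cone_growth:
  assumes y1: "y1 \<in> U" and y2: "y2 \<in> U"
    and c: "norm (snd (y1 - y2)) \<le> norm (fst (y1 - y2))"
  shows "inner (fst (y1 - y2)) (f y1 - f y2) - inner (snd (y1 - y2)) (g y1 - g y2)
           \<ge> c1 * (norm (fst (y1 - y2)))\<^sup>2"
proof -
  define D where "D = y1 - y2"
  define p where "p s = y2 + s *\<^sub>R D" for s
  define \<psi> where "\<psi> s = inner (fst D) (f (p s)) - inner (snd D) (g (p s))" for s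
  define \<psi>' where "\<psi>' s = (\<lambda>r::real. r * (inner (fst D) (blinfun_apply (f' (p s)) D)
                         - inner (snd D) (blinfun_apply (g' (p s)) D)))" for s
  have pU: "p s \<in> U" if "0 \<le> s" "s \<le> 1" for s
    using convexD_alt[OF H1_convex y2 y1, of s] that
    unfolding p_def D_def by (simp add: algebra_simps)
  have "(\<psi> has_derivative \<psi>' s) (at s within {0..1})" if s: "0 \<le> s" "s \<le> 1" for s
  proof -
    have "(p has_derivative (\<lambda>r. r *\<^sub>R D)) (at s within {0..1})"
      unfolding p_def by (auto intro!: derivative_eq_intros)
    from diff_chain_within[OF this F_has_derivative[OF pU[OF s]]]
    have "((\<lambda>s. (f (p s), g (p s))) has_derivative (\<lambda>r. DFapp f' g' (p s) (r *\<^sub>R D))) (at s within {0..1})"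
      by (simp add: o_def)
    from has_derivative_fst[OF this] has_derivative_snd[OF this]
    have "(\<psi> has_derivative (\<lambda>r. inner (fst D) (blinfun_apply (f' (p s)) (r *\<^sub>R D))
                              - inner (snd D) (blinfun_apply (g' (p s)) (r *\<^sub>R D)))) (at s within {0..1})"
      unfolding \<psi>_def DFapp_def
      by (intro has_derivative_diff bounded_linear.has_derivative[OF bounded_linear_inner_right]) auto
    then show ?thesis unfolding \<psi>'_def
      by (simp add: blinfun.scaleR_right inner_scaleR_right algebra_simps)
  qed
  then obtain \<xi> where \<xi>: "\<xi> \<in> {0<..<1}" and eq: "\<psi> 1 - \<psi> 0 = \<psi>' \<xi> (1 - 0)"
    using mvt_simple[of 0 1 \<psi> \<psi>'] by force
  have "\<psi>' \<xi> 1 \<ge> c1 * (norm (fst D))\<^sup>2"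
    using cone_form_growth[OF pU, of \<xi> "snd D" "fst D"] \<xi> c unfolding \<psi>'_def D_def
    by (simp del: fst_diff snd_diff)
  moreover have "\<psi> 1 - \<psi> 0 = inner (fst D) (f y1 - f y2) - inner (snd D) (g y1 - g y2)"
    unfolding \<psi>_def p_def D_def by (simp add: inner_diff_right)
  ultimately show ?thesis using eq unfolding D_def by simp
qed

lemma cone_form_diff_bounded:
  assumes y1: "y1 \<in> U" and y2: "y2 \<in> U"
  shows "cone_form (y1 - y2) \<le> d\<^sup>2"
proof (cases "cone_form (y1 - y2) > 0")
  case True
  have "Lfun y1 y2 = cone_form (y1 - y2)"
    unfolding Lfun_def cone_form_def by (simp add: norm_minus_commute)
  then have "y1 \<in> Ccone y2 \<inter> U" using True y1 unfolding Ccone_def by simp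
  then have "norm (fst (y1 - y2)) \<le> d" using H1_cone y2 unfolding Bbox_def by auto
  then have "(norm (fst (y1 - y2)))\<^sup>2 \<le> d\<^sup>2" by (intro power_mono) auto
  then show ?thesis unfolding cone_form_def by (smt (verit) zero_le_power2)
qed (simp add: not_less order_trans)

text \<open>No two points of \<open>\<Gamma>\<close> lie in each other's cone: along the flow, \<open>L\<close> of their difference
  would grow exponentially, while Hypothesis 1 keeps it bounded by \<open>d\<^sup>2\<close>.\<close>
lemma Gamma_noncone:
  assumes x1: "x1 \<in> \<Gamma>" and x2: "x2 \<in> \<Gamma>"
  shows "norm (fst x1 - fst x2) \<le> norm (snd x1 - snd x2)"
proof (rule ccontr)
  assume neg: "\<not> norm (fst x1 - fst x2) \<le> norm (snd x1 - snd x2)"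
  define \<Delta> where "\<Delta> t = Phi t x1 - Phi t x2" for t
  define \<phi> where "\<phi> t = cone_form (\<Delta> t)" for t
  define \<phi>' where "\<phi>' t = 2 * inner (fst (\<Delta> t)) (f (Phi t x1) - f (Phi t x2))
                         - 2 * inner (snd (\<Delta> t)) (g (Phi t x1) - g (Phi t x2))" for t
  have \<phi>0: "\<phi> 0 > 0"
    using neg cone_form_nonpos_iff[of "x1 - x2"]
    unfolding \<phi>_def \<Delta>_def flow0[OF x1] flow0[OF x2] by simp
  have d\<phi>: "(\<phi> has_real_derivative \<phi>' t) (at t within {0..})" if "t \<ge> 0" for t
    unfolding \<phi>_def \<phi>'_def \<Delta>_def
    using cone_form_deriv[OF has_vector_derivative_diff[OF flow_deriv[OF x1 that] flow_deriv[OF x2 that]]]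
    by simp
  have "\<phi>' t \<ge> (2 * c1) * \<phi> t" if t: "t \<ge> 0" "\<phi> t > 0" for t
  proof -
    have "inner (fst (\<Delta> t)) (f (Phi t x1) - f (Phi t x2)) - inner (snd (\<Delta> t)) (g (Phi t x1) - g (Phi t x2))
          \<ge> c1 * (norm (fst (\<Delta> t)))\<^sup>2"
      using secant_cone_growth[OF flow_U[OF x1 t(1)] flow_U[OF x2 t(1)]]
        cone_form_pos_imp(1)[of "\<Delta> t"] t(2) unfolding \<Delta>_def \<phi>_def by simp
    moreover have "c1 * \<phi> t \<le> c1 * (norm (fst (\<Delta> t)))\<^sup>2"
      using H2_c1 unfolding \<phi>_def cone_form_def by (intro mult_left_mono) auto
    ultimately show ?thesis unfolding \<phi>'_def by simp
  qed
  then have lower: "\<phi> t \<ge> \<phi> 0 * exp ((2 * c1) * t)" if "t \<ge> 0" for t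
    using exponential_growth[OF d\<phi> _ \<phi>0 that] by blast
  have upper: "\<phi> t \<le> d\<^sup>2" if t: "t \<ge> 0" for t
    unfolding \<phi>_def \<Delta>_def by (rule cone_form_diff_bounded[OF flow_U[OF x1 t] flow_U[OF x2 t]])
  define t where "t = d\<^sup>2 / (2 * c1 * \<phi> 0)"
  have t0: "t \<ge> 0" unfolding t_def using H2_c1 \<phi>0 by simp
  have "\<phi> 0 * (1 + (2 * c1) * t) \<le> \<phi> 0 * exp ((2 * c1) * t)"
    using \<phi>0 by (intro mult_left_mono exp_ge_add_one_self) auto
  moreover have "\<phi> 0 * (1 + (2 * c1) * t) = \<phi> 0 + d\<^sup>2"
    unfolding t_def using H2_c1 \<phi>0 by (simp add: field_simps)
  ultimately show False using lower[OF t0] upper[OF t0] \<phi>0 by linarith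
qed

lemma h_lipschitz: "z1 \<in> snd ` U \<Longrightarrow> z2 \<in> snd ` U \<Longrightarrow> norm (h z1 - h z2) \<le> norm (z1 - z2)"
  using Gamma_noncone[OF graph_Gamma graph_Gamma] by simp

subsection \<open>The variational equation\<close>

definition is_variational_solution :: "'a \<times> 'b \<Rightarrow> (real \<Rightarrow> 'a \<times> 'b) \<Rightarrow> 'a \<times> 'b \<Rightarrow> bool" where
  "is_variational_solution x w v \<longleftrightarrow> w 0 = v \<and>
     (\<forall>t\<ge>0. (w has_vector_derivative DFapp f' g' (Phi t x) (w t)) (at t within {0..}))"

lemma variational_linear_ode:
  assumes x: "x \<in> \<Gamma>"
  shows "linear_ode (\<lambda>t. DFapp f' g' (Phi t x))"
proof (rule linear_ode.intro)
  have im: "(\<lambda>s. Phi s x) ` {0..} \<subseteq> U" using flow_U[OF x] by auto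
  have cf: "continuous_on {0..} (\<lambda>s. f' (Phi s x))"
    by (rule continuous_on_compose2[OF H2_fcont flow_continuous[OF x] im])
  have cg: "continuous_on {0..} (\<lambda>s. g' (Phi s x))"
    by (rule continuous_on_compose2[OF H2_gcont flow_continuous[OF x] im])
  show "\<And>t. linear (DFapp f' g' (Phi t x))" by (rule DFapp_linear)
  show "continuous_on {0..} (\<lambda>s. DFapp f' g' (Phi s x) (w s))" if "continuous_on {0..} w" for w
    unfolding DFapp_def using that by (intro continuous_intros cf cg)
  fix T :: real
  have orbit: "compact ((\<lambda>s. Phi s x) ` {0..T})" "(\<lambda>s. Phi s x) ` {0..T} \<subseteq> U"
    using flow_U[OF x] by (auto intro!: compact_continuous_image
        continuous_on_subset[OF flow_continuous[OF x]])
  then obtain M where M: "M \<ge> 0" "\<forall>s\<in>{0..T}. norm (f' (Phi s x)) + norm (g' (Phi s x)) \<le> M"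
    using DF_bounded_on_compact[OF orbit] by blast
  have "norm (DFapp f' g' (Phi t x) v) \<le> M * norm v" if "t \<in> {0..T}" for t v
    using DFapp_bound[of f' g' "Phi t x" v] M that
    by (meson mult_right_mono norm_ge_zero order_trans)
  then show "\<exists>M\<ge>0. \<forall>t\<in>{0..T}. \<forall>v. norm (DFapp f' g' (Phi t x) v) \<le> M * norm v"
    using M(1) by blast
qed

lemma variational_solution_exists: "x \<in> \<Gamma> \<Longrightarrow> \<exists>w. is_variational_solution x w v"
  using linear_ode.linear_ode_exists[OF variational_linear_ode]
  unfolding is_variational_solution_def by blast

lemma variational_solution_unique:
  assumes x: "x \<in> \<Gamma>" and w: "is_variational_solution x w v" and w': "is_variational_solution x w' v"
    and t: "t \<ge> 0"
  shows "w t = w' t"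
proof -
  have "(\<lambda>t. w t - w' t) t = 0"
  proof (rule linear_ode.linear_ode_zero[OF variational_linear_ode[OF x]])
    fix s :: real assume s: "s \<ge> 0"
    have "((\<lambda>t. w t - w' t) has_vector_derivative
          DFapp f' g' (Phi s x) (w s) - DFapp f' g' (Phi s x) (w' s)) (at s within {0..})"
      using w w' s unfolding is_variational_solution_def by (intro has_vector_derivative_diff) auto
    then show "((\<lambda>t. w t - w' t) has_vector_derivative DFapp f' g' (Phi s x) (w s - w' s)) (at s within {0..})"
      by (simp add: linear_diff[OF DFapp_linear])
  qed (use w w' t in \<open>auto simp: is_variational_solution_def\<close>)
  then show ?thesis by simp
qed

text \<open>The fundamental solution \<open>Q(t, x)\<close>, assembled linearly from the solutions for a basis.\<close>
definition Q :: "'a \<times> 'b \<Rightarrow> real \<Rightarrow> 'a \<times> 'b \<Rightarrow> 'a \<times> 'b" where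
  "Q x t v = (\<Sum>b\<in>Basis. inner v b *\<^sub>R (SOME w. is_variational_solution x w b) t)"

lemma Q_linear: "linear (Q x t)"
  unfolding Q_def
  by (intro linearI) (auto simp: inner_add_left scaleR_add_left sum.distrib scaleR_sum_right)

lemma Q_bounded_linear: "bounded_linear (Q x t)"
  using Q_linear linear_conv_bounded_linear by blast

lemma Q_solution:
  assumes x: "x \<in> \<Gamma>"
  shows "is_variational_solution x (\<lambda>t. Q x t v) v"
proof -
  let ?w = "\<lambda>b. SOME w. is_variational_solution x w b"
  have sol: "is_variational_solution x (?w b) b" for b
    using variational_solution_exists[OF x] by (rule someI_ex)
  show ?thesis unfolding is_variational_solution_def
  proof (intro conjI allI impI)
    show "Q x 0 v = v" unfolding Q_def using sol
      by (simp add: is_variational_solution_def euclidean_representation)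
    fix t :: real assume t: "t \<ge> 0"
    have "((\<lambda>t. Q x t v) has_vector_derivative
           (\<Sum>b\<in>Basis. inner v b *\<^sub>R DFapp f' g' (Phi t x) (?w b t))) (at t within {0..})"
      unfolding Q_def using sol t unfolding is_variational_solution_def
      by (intro has_vector_derivative_sum
          bounded_linear.has_vector_derivative[OF bounded_linear_scaleR_right]) auto
    also have "(\<Sum>b\<in>Basis. inner v b *\<^sub>R DFapp f' g' (Phi t x) (?w b t)) = DFapp f' g' (Phi t x) (Q x t v)"
      unfolding Q_def by (simp add: linear_sum[OF DFapp_linear] linear_cmul[OF DFapp_linear] o_def)
    finally show "((\<lambda>t. Q x t v) has_vector_derivative DFapp f' g' (Phi t x) (Q x t v)) (at t within {0..})" .
  qed
qed

lemma Q_zero_time: "x \<in> \<Gamma> \<Longrightarrow> Q x 0 v = v"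
  using Q_solution unfolding is_variational_solution_def by blast

definition noncone_set :: "'a \<times> 'b \<Rightarrow> ('a \<times> 'b) set" where
  "noncone_set x = {v. \<forall>t\<ge>0. cone_form (Q x t v) \<le> 0}"

lemma Tset_eq_noncone_set:
  assumes x: "x \<in> \<Gamma>"
  shows "Tset f' g' Phi x = noncone_set x"
proof (intro set_eqI iffI)
  fix v assume "v \<in> Tset f' g' Phi x"
  then show "v \<in> noncone_set x" using Q_solution[OF x, of v]
    unfolding Tset_def noncone_set_def is_variational_solution_def by (auto simp: Lfun_zero)
next
  fix v assume v: "v \<in> noncone_set x"
  have "Lfun (w t) 0 \<le> 0" if "is_variational_solution x w v" "t \<ge> 0" for w t
    using variational_solution_unique[OF x that(1) Q_solution[OF x] that(2)] v that(2)
    unfolding noncone_set_def by (simp add: Lfun_zero)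
  then show "v \<in> Tset f' g' Phi x"
    unfolding Tset_def is_variational_solution_def by blast
qed

lemma zero_in_noncone_set: "0 \<in> noncone_set x"
  unfolding noncone_set_def by (simp add: linear_0[OF Q_linear] cone_form_def)

lemma cone_invariant:
  assumes x: "x \<in> \<Gamma>" and t0: "t0 \<ge> 0" and p: "cone_form (Q x t0 v) > 0" and t: "t \<ge> t0"
  shows "cone_form (Q x t v) \<ge> cone_form (Q x t0 v)"
proof (rule positive_persists[where \<phi>="\<lambda>t. cone_form (Q x t v)", OF _ _ p t])
  fix s assume s: "s \<ge> t0"
  have "((\<lambda>t. Q x t v) has_vector_derivative DFapp f' g' (Phi s x) (Q x s v)) (at s within {0..})"
    using Q_solution[OF x] s t0 unfolding is_variational_solution_def by auto
  from has_field_derivative_subset[OF cone_form_deriv[OF this]]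
  show "((\<lambda>t. cone_form (Q x t v)) has_real_derivative
     2 * inner (fst (Q x s v)) (blinfun_apply (f' (Phi s x)) (Q x s v))
     - 2 * inner (snd (Q x s v)) (blinfun_apply (g' (Phi s x)) (Q x s v))) (at s within {t0..})"
    using t0 by (auto simp: DFapp_def)
  assume pos: "cone_form (Q x s v) > 0"
  have "c1 * (norm (fst (Q x s v)))\<^sup>2 \<le> inner (fst (Q x s v)) (blinfun_apply (f' (Phi s x)) (Q x s v))
        - inner (snd (Q x s v)) (blinfun_apply (g' (Phi s x)) (Q x s v))"
    using cone_form_growth[OF flow_U[OF x], of s "snd (Q x s v)" "fst (Q x s v)"]
      cone_form_pos_imp(1)[OF pos] s t0 by simp
  moreover have "c1 * (norm (fst (Q x s v)))\<^sup>2 \<ge> 0" using H2_c1 by simp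
  ultimately show "0 \<le> 2 * inner (fst (Q x s v)) (blinfun_apply (f' (Phi s x)) (Q x s v))
     - 2 * inner (snd (Q x s v)) (blinfun_apply (g' (Phi s x)) (Q x s v))" by simp
qed

lemma noncone_backward:
  assumes x: "x \<in> \<Gamma>" and \<tau>: "cone_form (Q x \<tau> v) \<le> 0" and t: "0 \<le> t" "t \<le> \<tau>"
  shows "cone_form (Q x t v) \<le> 0"
  using cone_invariant[OF x t(1) _ t(2), of v] \<tau> by force

subsection \<open>\<open>T(x)\<close> is the graph of a linear map\<close>

text \<open>Dominated splitting: measured against any variational orbit starting in the cone, the
  \<open>z\<close>-component of an orbit that never enters the cone is damped by the factor \<open>e^{-c\<^sub>1 t}\<close>.\<close>
lemma noncone_dominated:
  assumes x: "x \<in> \<Gamma>" and p1: "cone_form v1 > 0" and v2: "v2 \<in> noncone_set x" and t: "t \<ge> 0"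
  shows "norm (snd (Q x t v2)) * exp (c1 * t) * norm (fst v1) \<le> norm (snd v2) * norm (fst (Q x t v1))"
proof -
  let ?w1 = "\<lambda>s. Q x s v1" and ?w2 = "\<lambda>s. Q x s v2"
  have cone1: "cone_form (?w1 s) > 0" if "s \<ge> 0" for s
    using cone_invariant[of x 0 v1 s] x that p1 Q_zero_time[OF x, of v1] by simp
  have d: "((\<lambda>s. Q x s v) has_vector_derivative DFapp f' g' (Phi s x) (Q x s v)) (at s within {0..})"
    if "s \<ge> 0" for s v
    using Q_solution[OF x, of v] that unfolding is_variational_solution_def by auto
  define p where "p s = (norm (fst (?w1 s)))\<^sup>2" for s
  define q where "q s = (norm (snd (?w2 s)))\<^sup>2 * exp (2 * c1 * s)" for s
  define k where "k s = 2 * (alpha (Phi s x) - norm_Dzf (Phi s x))" for s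
  have "q t * p 0 \<le> q 0 * p t"
  proof (rule ratio_comparison[where k=k, OF _ _ _ _ _ _ t])
    fix s :: real assume s: "s \<ge> 0"
    show "(p has_real_derivative 2 * inner (fst (?w1 s)) (blinfun_apply (f' (Phi s x)) (?w1 s)))
            (at s within {0..})"
      unfolding p_def using norm_squared_deriv[OF has_vector_derivative_fst_snd(1)[OF d[OF s, of v1]]]
      by (simp add: DFapp_def)
    have E: "((\<lambda>s. exp (2 * c1 * s)) has_real_derivative exp (2 * c1 * s) * (2 * c1)) (at s within {0..})"
      by (auto intro!: derivative_eq_intros)
    from DERIV_mult[OF norm_squared_deriv[OF has_vector_derivative_fst_snd(2)[OF d[OF s, of v2]]] E]
    show "(q has_real_derivative 2 * inner (snd (?w2 s)) (blinfun_apply (g' (Phi s x)) (?w2 s))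
            * exp (2 * c1 * s) + (norm (snd (?w2 s)))\<^sup>2 * (exp (2 * c1 * s) * (2 * c1))) (at s within {0..})"
      unfolding q_def by (simp add: DFapp_def mult.commute mult.left_commute)
    show "p s > 0" unfolding p_def using cone_form_pos_imp(2)[OF cone1[OF s]] by simp
    show "q s \<ge> 0" unfolding q_def by simp
    show "2 * inner (fst (?w1 s)) (blinfun_apply (f' (Phi s x)) (?w1 s)) \<ge> k s * p s"
      using cone_expansion[OF flow_U[OF x s] cone_form_pos_imp(1)[OF cone1[OF s]]]
      unfolding k_def p_def by (simp add: algebra_simps)
    have "norm (fst (?w2 s)) \<le> norm (snd (?w2 s))"
      using v2 s unfolding noncone_set_def by (simp add: cone_form_nonpos_iff)
    from noncone_contraction[OF flow_U[OF x s] this]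
    have "2 * inner (snd (?w2 s)) (blinfun_apply (g' (Phi s x)) (?w2 s)) + 2 * c1 * (norm (snd (?w2 s)))\<^sup>2
          \<le> k s * (norm (snd (?w2 s)))\<^sup>2"
      unfolding k_def by (simp add: algebra_simps)
    from mult_right_mono[OF this, of "exp (2 * c1 * s)"]
    show "2 * inner (snd (?w2 s)) (blinfun_apply (g' (Phi s x)) (?w2 s)) * exp (2 * c1 * s)
          + (norm (snd (?w2 s)))\<^sup>2 * (exp (2 * c1 * s) * (2 * c1)) \<le> k s * q s"
      unfolding q_def by (simp add: algebra_simps)
  qed
  then have "(norm (snd (?w2 t)) * exp (c1 * t) * norm (fst v1))\<^sup>2 \<le> (norm (snd v2) * norm (fst (?w1 t)))\<^sup>2"
    unfolding p_def q_def Q_zero_time[OF x]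
    by (simp add: power_mult_distrib exp_double[symmetric] algebra_simps)
  then show ?thesis by (rule power2_le_imp_le) simp
qed

text \<open>Consequently no nonzero horizontal vector \<open>(e, 0)\<close> (which lies in the cone) is a linear
  combination of three vectors of \<open>T(x)\<close>: the \<open>a\<close>-component of its orbit would be bounded by
  that of the combination, hence by a constant, yet it grows like \<open>e^{c\<^sub>1 t}\<close>.\<close>
lemma horizontal_combination_zero:
  assumes x: "x \<in> \<Gamma>"
    and v1: "v1 \<in> noncone_set x" and v2: "v2 \<in> noncone_set x" and v3: "v3 \<in> noncone_set x"
    and eq: "(e, 0) = ra *\<^sub>R v1 + rb *\<^sub>R v2 + rc *\<^sub>R v3"
  shows "e = 0"
proof (rule ccontr)
  assume e: "e \<noteq> 0"
  have cone_e: "cone_form (e, 0) > 0" using e by (simp add: cone_form_def)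
  define K where "K = \<bar>ra\<bar> * norm (snd v1) + \<bar>rb\<bar> * norm (snd v2) + \<bar>rc\<bar> * norm (snd v3)"
  have bound: "exp (c1 * t) * norm e \<le> K" if t: "t \<ge> 0" for t
  proof -
    let ?F = "norm (fst (Q x t (e, 0)))" and ?E = "exp (c1 * t) * norm e"
    have "cone_form (Q x t (e, 0)) > 0"
      using cone_invariant[of x 0 "(e, 0)" t] x t cone_e Q_zero_time[OF x, of "(e, 0)"] by force
    then have F: "?F > 0" by (rule cone_form_pos_imp(2))
    have dom: "norm (fst (Q x t v)) * ?E \<le> norm (snd v) * ?F" if "v \<in> noncone_set x" for v
    proof -
      have "norm (fst (Q x t v)) \<le> norm (snd (Q x t v))"
        using that t unfolding noncone_set_def by (simp add: cone_form_nonpos_iff)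
      then have "norm (fst (Q x t v)) * ?E \<le> norm (snd (Q x t v)) * ?E" by (simp add: mult_right_mono)
      also have "\<dots> \<le> norm (snd v) * ?F"
        using noncone_dominated[OF x cone_e that t] by (simp add: mult.assoc)
      finally show ?thesis .
    qed
    have "Q x t (e, 0) = ra *\<^sub>R Q x t v1 + rb *\<^sub>R Q x t v2 + rc *\<^sub>R Q x t v3"
      unfolding eq by (simp add: linear_add[OF Q_linear] linear_scale[OF Q_linear])
    then have "?F \<le> \<bar>ra\<bar> * norm (fst (Q x t v1)) + \<bar>rb\<bar> * norm (fst (Q x t v2)) + \<bar>rc\<bar> * norm (fst (Q x t v3))"
      by (simp add: norm_triangle_le norm_triangle_ineq add_mono)
    then have "?F * ?E \<le> (\<bar>ra\<bar> * norm (fst (Q x t v1)) + \<bar>rb\<bar> * norm (fst (Q x t v2))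
                          + \<bar>rc\<bar> * norm (fst (Q x t v3))) * ?E"
      by (rule mult_right_mono) simp
    also have "\<dots> = \<bar>ra\<bar> * (norm (fst (Q x t v1)) * ?E) + \<bar>rb\<bar> * (norm (fst (Q x t v2)) * ?E)
                          + \<bar>rc\<bar> * (norm (fst (Q x t v3)) * ?E)"
      by (simp add: algebra_simps)
    also have "\<dots> \<le> \<bar>ra\<bar> * (norm (snd v1) * ?F) + \<bar>rb\<bar> * (norm (snd v2) * ?F) + \<bar>rc\<bar> * (norm (snd v3) * ?F)"
      using dom[OF v1] dom[OF v2] dom[OF v3] by (intro add_mono mult_left_mono) auto
    also have "\<dots> = K * ?F" unfolding K_def by (simp add: algebra_simps)
    finally show ?thesis using F by (simp add: mult.commute)
  qed
  define t where "t = K / (c1 * norm e)"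
  have "K \<ge> 0" unfolding K_def by simp
  then have t0: "t \<ge> 0" unfolding t_def using H2_c1 by simp
  have "(1 + c1 * t) * norm e \<le> exp (c1 * t) * norm e"
    by (intro mult_right_mono exp_ge_add_one_self) auto
  moreover have "(1 + c1 * t) * norm e = norm e + K"
    unfolding t_def using H2_c1 e by (simp add: field_simps)
  moreover have "norm e > 0" using e by simp
  ultimately show False using bound[OF t0] by linarith
qed

text \<open>We choose \<open>a\<close> with \<open>fst (Q(k,x)(a,z)) = 0\<close>,
  possible because \<open>a \<mapsto> fst (Q(k,x)(a,0))\<close> is injective (horizontal vectors stay in the cone),
  hence surjective.\<close>
lemma finite_horizon_noncone:
  assumes x: "x \<in> \<Gamma>" and k: "k \<ge> 0"
  shows "\<exists>a. norm a \<le> norm z \<and> (\<forall>t. 0 \<le> t \<and> t \<le> k \<longrightarrow> cone_form (Q x t (a, z)) \<le> 0)"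
proof -
  define L where "L a = fst (Q x k (a, 0))" for a :: 'a
  have linL: "linear L"
  proof (rule linearI)
    fix a b :: 'a and c :: real
    show "L (a + b) = L a + L b"
      using linear_add[OF Q_linear, of x k "(a, 0)" "(b, 0)"] unfolding L_def by simp
    show "L (c *\<^sub>R a) = c *\<^sub>R L a"
      using linear_scale[OF Q_linear, of x k c "(a, 0)"] unfolding L_def by simp
  qed
  have "inj L"
  proof (subst linear_injective_0[OF linL], intro allI impI)
    fix a assume La: "L a = 0"
    show "a = 0"
    proof (rule ccontr)
      assume "a \<noteq> 0"
      then have p: "cone_form (Q x 0 (a, 0::'b)) > 0" by (simp add: Q_zero_time[OF x] cone_form_def)
      have "cone_form (Q x k (a, 0)) \<le> 0" using La unfolding L_def cone_form_def by simp
      then show False using cone_invariant[OF x order_refl p k] p by simp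
    qed
  qed
  then obtain a where a: "L a = - fst (Q x k (0, z))"
    by (metis linear_inj_imp_surj[OF linL] surjD)
  have "fst (Q x k (a, z)) = L a + fst (Q x k (0, z))"
    unfolding L_def using linear_add[OF Q_linear, of x k "(a, 0)" "(0, z)"] by simp
  then have "cone_form (Q x k (a, z)) \<le> 0" using a by (simp add: cone_form_def)
  then have nc: "cone_form (Q x t (a, z)) \<le> 0" if "0 \<le> t" "t \<le> k" for t
    using noncone_backward[OF x _ that] by blast
  then have "norm a \<le> norm z" using nc[of 0] k Q_zero_time[OF x] by (simp add: cone_form_nonpos_iff)
  then show ?thesis using nc by blast
qed

text \<open>Every fibre of \<open>T(x)\<close> over \<open>z\<close> is nonempty: the finite-horizon solutions are bounded, so a
  limit point exists, and it lies in \<open>T(x)\<close> by continuity of \<open>Q\<close> and of the cone form.\<close>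
lemma noncone_set_fibre_nonempty:
  assumes x: "x \<in> \<Gamma>"
  shows "\<exists>a. (a, z) \<in> noncone_set x"
proof -
  obtain A where A: "\<And>k. norm (A k) \<le> norm z"
      and Anc: "\<And>k t. 0 \<le> t \<Longrightarrow> t \<le> real k \<Longrightarrow> cone_form (Q x t (A k, z)) \<le> 0"
    using finite_horizon_noncone[OF x of_nat_0_le_iff] by metis
  have "\<forall>n. A n \<in> cball 0 (norm z)" using A by simp
  then obtain l r where r: "strict_mono r" and lim: "(A \<circ> r) \<longlonglongrightarrow> l"
    using compact_imp_seq_compact[OF compact_cball] by (metis seq_compactE)
  have "cone_form (Q x t (l, z)) \<le> 0" if t: "t \<ge> 0" for t
  proof (rule LIMSEQ_le_const2)
    have "(\<lambda>n. (A (r n), z)) \<longlonglongrightarrow> (l, z)" using lim by (intro tendsto_intros) (simp add: o_def)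
    then show "(\<lambda>n. cone_form (Q x t (A (r n), z))) \<longlonglongrightarrow> cone_form (Q x t (l, z))"
      by (intro isCont_tendsto_compose[OF continuous_cone_form]
          bounded_linear.tendsto[OF Q_bounded_linear])
    show "\<exists>N. \<forall>n\<ge>N. cone_form (Q x t (A (r n), z)) \<le> 0"
    proof (intro exI allI impI)
      fix n assume "n \<ge> nat \<lceil>t\<rceil>"
      then have "t \<le> real (r n)" using seq_suble[OF r, of n] by linarith
      then show "cone_form (Q x t (A (r n), z)) \<le> 0" using Anc t by blast
    qed
  qed
  then show ?thesis unfolding noncone_set_def by blast
qed

definition H :: "'a \<times> 'b \<Rightarrow> 'b \<Rightarrow> 'a" where
  "H x z = (SOME a. (a, z) \<in> noncone_set x)"

lemma H_in_noncone_set: "x \<in> \<Gamma> \<Longrightarrow> (H x z, z) \<in> noncone_set x"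
  unfolding H_def using noncone_set_fibre_nonempty by (rule someI_ex)

lemma noncone_set_unique:
  assumes x: "x \<in> \<Gamma>" and a: "(a, z) \<in> noncone_set x"
  shows "a = H x z"
  using horizontal_combination_zero[OF x a H_in_noncone_set[OF x, of z] zero_in_noncone_set,
      where e="a - H x z" and ra=1 and rb="-1" and rc=0]
  by simp

lemma H_linear:
  assumes x: "x \<in> \<Gamma>"
  shows "linear (H x)"
proof (rule linearI)
  fix z1 z2 :: 'b
  show "H x (z1 + z2) = H x z1 + H x z2"
    using horizontal_combination_zero[OF x H_in_noncone_set[OF x, of z1] H_in_noncone_set[OF x, of z2]
        H_in_noncone_set[OF x, of "z1 + z2"],
        where e="H x z1 + H x z2 - H x (z1 + z2)" and ra=1 and rb=1 and rc="-1"]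
    by simp
next
  fix c :: real and z :: 'b
  show "H x (c *\<^sub>R z) = c *\<^sub>R H x z"
    using horizontal_combination_zero[OF x H_in_noncone_set[OF x, of z]
        H_in_noncone_set[OF x, of "c *\<^sub>R z"] zero_in_noncone_set,
        where e="c *\<^sub>R H x z - H x (c *\<^sub>R z)" and ra=c and rb="-1" and rc=0]
    by simp
qed

lemma Hmap_eq_H:
  assumes x: "x \<in> \<Gamma>"
  shows "Hmap f' g' Phi x = H x"
  unfolding Hmap_def
proof (rule the_equality)
  have "noncone_set x = {(H x z, z) | z. True}"
    using noncone_set_unique[OF x] H_in_noncone_set[OF x] by (auto simp: prod_eq_iff)
  then show "linear (H x) \<and> Tset f' g' Phi x = {(H x z, z) | z. True}"
    using H_linear[OF x] Tset_eq_noncone_set[OF x] by simp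
next
  fix H' assume "linear H' \<and> Tset f' g' Phi x = {(H' z, z) | z. True}"
  then have "(H' z, z) \<in> noncone_set x" for z using Tset_eq_noncone_set[OF x] by blast
  then show "H' = H x" using noncone_set_unique[OF x] by blast
qed

subsection \<open>Linearisation of the flow\<close>

lemma F_lipschitz:
  assumes S: "convex S" "S \<subseteq> U" and M: "\<And>p. p \<in> S \<Longrightarrow> norm (f' p) + norm (g' p) \<le> M"
    and y: "y \<in> S" and y': "y' \<in> S"
  shows "norm ((f y', g y') - (f y, g y)) \<le> M * norm (y' - y)"
proof (rule differentiable_bound[OF S(1) _ _ y' y])
  fix p assume p: "p \<in> S"
  show "((\<lambda>u. (f u, g u)) has_derivative DFapp f' g' p) (at p within S)"
    using F_has_derivative p S(2) by blast
  show "onorm (DFapp f' g' p) \<le> M"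
    using DFapp_bound[of f' g' p] M[OF p]
    by (intro onorm_le) (meson mult_right_mono norm_ge_zero order_trans)
qed

lemma F_linearization_error:
  assumes S: "convex S" "S \<subseteq> U" and y: "y \<in> S" and y': "y' \<in> S"
    and E: "\<And>p. p \<in> S \<Longrightarrow> norm (f' p - f' y) + norm (g' p - g' y) \<le> \<epsilon>"
  shows "norm ((f y', g y') - (f y, g y) - DFapp f' g' y (y' - y)) \<le> \<epsilon> * norm (y' - y)"
proof -
  let ?R = "\<lambda>u. (f u, g u) - DFapp f' g' y u"
  have "norm (?R y' - ?R y) \<le> \<epsilon> * norm (y' - y)"
  proof (rule differentiable_bound[OF S(1) _ _ y' y])
    fix p assume p: "p \<in> S"
    show "(?R has_derivative (\<lambda>v. DFapp f' g' p v - DFapp f' g' y v)) (at p within S)"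
      using F_has_derivative[of p S] p S(2)
        bounded_linear_imp_has_derivative[OF DFapp_bounded_linear[of f' g' y]]
      by (auto intro!: has_derivative_diff)
    show "onorm (\<lambda>v. DFapp f' g' p v - DFapp f' g' y v) \<le> \<epsilon>"
      using DFapp_diff_bound[of f' g' p _ y] E[OF p]
      by (intro onorm_le) (meson mult_right_mono norm_ge_zero order_trans)
  qed
  moreover have "?R y' - ?R y = (f y', g y') - (f y, g y) - DFapp f' g' y (y' - y)"
    by (simp add: linear_diff[OF DFapp_linear])
  ultimately show ?thesis by simp
qed

lemma F_remainder_bound:
  assumes B: "cball y R \<subseteq> U" and y': "norm (y' - y) \<le> R"
    and E: "\<And>p. p \<in> cball y R \<Longrightarrow> norm (f' p - f' y) + norm (g' p - g' y) \<le> \<epsilon>"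
    and M: "norm (f' y) + norm (g' y) \<le> M"
  shows "norm ((f y', g y') - (f y, g y) - DFapp f' g' y w) \<le> \<epsilon> * norm (y' - y) + M * norm (y' - y - w)"
proof -
  have "R \<ge> 0" using y' norm_ge_zero order_trans by blast
  then have "y \<in> cball y R" by simp
  moreover have "y' \<in> cball y R" using y' by (simp add: dist_norm norm_minus_commute)
  ultimately have taylor: "norm ((f y', g y') - (f y, g y) - DFapp f' g' y (y' - y)) \<le> \<epsilon> * norm (y' - y)"
    by (rule F_linearization_error[OF convex_cball B _ _ E])
  have lin: "norm (DFapp f' g' y (y' - y - w)) \<le> M * norm (y' - y - w)"
    using DFapp_bound[of f' g' y "y' - y - w"] M by (meson mult_right_mono norm_ge_zero order_trans)
  have "(f y', g y') - (f y, g y) - DFapp f' g' y w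
        = ((f y', g y') - (f y, g y) - DFapp f' g' y (y' - y)) + DFapp f' g' y (y' - y - w)"
    by (simp add: linear_diff[OF DFapp_linear])
  then have "norm ((f y', g y') - (f y, g y) - DFapp f' g' y w)
        \<le> norm ((f y', g y') - (f y, g y) - DFapp f' g' y (y' - y)) + norm (DFapp f' g' y (y' - y - w))"
    by (simp only: norm_triangle_ineq)
  then show ?thesis using taylor lin by linarith
qed

lemma compact_tube:
  assumes x0: "x0 \<in> \<Gamma>" and \<tau>: "\<tau> \<ge> 0"
  shows "\<exists>\<delta>>0. \<exists>N. compact N \<and> N \<subseteq> U \<and> (\<forall>s\<in>{0..\<tau>}. cball (Phi s x0) \<delta> \<subseteq> N)"
proof -
  define C where "C = (\<lambda>s. Phi s x0) ` {0..\<tau>}"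
  have cC: "compact C" unfolding C_def
    by (rule compact_continuous_image[OF continuous_on_subset[OF flow_continuous[OF x0]]]) auto
  have CU: "C \<subseteq> U" unfolding C_def using flow_U[OF x0] by auto
  obtain d where d: "d > 0" and dd: "\<forall>x\<in>C. \<forall>y\<in>- U. d \<le> dist x y"
    using separate_compact_closed[OF cC _ , of "- U"] H1_open CU by auto
  define N where "N = {y + b | y b. y \<in> C \<and> b \<in> cball 0 (d/2)}"
  have "compact N" unfolding N_def by (rule compact_sums[OF cC compact_cball])
  moreover have "N \<subseteq> U"
  proof
    fix z assume "z \<in> N"
    then obtain y b where "z = y + b" "y \<in> C" "norm b \<le> d/2" unfolding N_def by auto
    then show "z \<in> U" using dd d by (force simp: dist_norm)
  qed
  moreover have "cball (Phi s x0) (d/2) \<subseteq> N" if "s \<in> {0..\<tau>}" for s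
  proof
    fix z assume "z \<in> cball (Phi s x0) (d/2)"
    then have "z = Phi s x0 + (z - Phi s x0)" "Phi s x0 \<in> C" "z - Phi s x0 \<in> cball 0 (d/2)"
      using that unfolding C_def by (auto simp: dist_norm norm_minus_commute)
    then show "z \<in> N" unfolding N_def by blast
  qed
  ultimately show ?thesis using d by (intro exI[of _ "d/2"] exI[of _ N] conjI) auto
qed

text \<open>Orbits that start close stay close: within a tube of radius \<open>\<delta>\<close> around the orbit of \<open>x\<^sub>0\<close> on
  which \<open>|DF| \<le> M\<close>, the distance of the orbits grows at most by the factor \<open>e^{(M+1)\<tau>}\<close>; by
  continuous induction the orbit of \<open>x\<close> never leaves the tube.\<close>
lemma orbit_separation_bound:
  assumes x0: "x0 \<in> \<Gamma>" and x: "x \<in> \<Gamma>" and \<delta>: "\<delta> > 0" and M: "M \<ge> 0"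
    and tube: "\<forall>s\<in>{0..\<tau>}. cball (Phi s x0) \<delta> \<subseteq> N" and NU: "N \<subseteq> U"
    and DF_bound: "\<And>p. p \<in> N \<Longrightarrow> norm (f' p) + norm (g' p) \<le> M"
    and close: "norm (x - x0) * exp ((M + 1) * \<tau>) < \<delta>"
    and s: "0 \<le> s" "s \<le> \<tau>"
  shows "norm (Phi s x - Phi s x0) \<le> norm (x - x0) * exp ((M + 1) * \<tau>)"
proof -
  define \<Delta> where "\<Delta> s = Phi s x - Phi s x0" for s
  have d\<Delta>: "(\<Delta> has_vector_derivative (f (Phi s x), g (Phi s x)) - (f (Phi s x0), g (Phi s x0)))
              (at s within {0..})" if "s \<ge> 0" for s
    unfolding \<Delta>_def by (intro has_vector_derivative_diff flow_deriv x x0 that)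
  have growth: "norm (\<Delta> s) \<le> norm (x - x0) * exp ((M + 1) * \<tau>)"
    if s: "0 \<le> s" "s \<le> \<tau>" and inside: "\<And>t. 0 < t \<Longrightarrow> t < s \<Longrightarrow> norm (\<Delta> t) < \<delta>" for s
  proof -
    have "norm (\<Delta> s) \<le> (norm (\<Delta> 0) + 0) * exp ((M + 1) * s)"
    proof (rule affine_growth_bound[OF d\<Delta> _ M order_refl s(1)])
      fix t assume t: "0 < t" "t < s"
      have t\<tau>: "0 \<le> t" "t \<le> \<tau>" using t s by auto
      have ball: "cball (Phi t x0) \<delta> \<subseteq> N" using tube t\<tau> by auto
      have "norm ((f (Phi t x), g (Phi t x)) - (f (Phi t x0), g (Phi t x0))) \<le> M * norm (Phi t x - Phi t x0)"
      proof (rule F_lipschitz[OF convex_cball subset_trans[OF ball NU] DF_bound[OF subsetD[OF ball]]])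
        show "Phi t x0 \<in> cball (Phi t x0) \<delta>" using \<delta> by simp
        show "Phi t x \<in> cball (Phi t x0) \<delta>"
          using inside[OF t] by (simp add: \<Delta>_def dist_norm norm_minus_commute less_imp_le)
      qed
      then show "norm ((f (Phi t x), g (Phi t x)) - (f (Phi t x0), g (Phi t x0))) \<le> 0 + M * norm (\<Delta> t)"
        unfolding \<Delta>_def by simp
    qed
    also have "\<dots> \<le> norm (x - x0) * exp ((M + 1) * \<tau>)"
      using s M by (simp add: \<Delta>_def flow0[OF x] flow0[OF x0] mult_left_mono)
    finally show ?thesis .
  qed
  have "norm (\<Delta> t) < \<delta>" if "0 \<le> t" "t \<le> \<tau>" for t
  proof (rule continuous_induction[where \<phi>="\<lambda>t. norm (\<Delta> t)", OF _ _ that])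
    show "continuous_on {0..\<tau>} (\<lambda>t. norm (\<Delta> t))"
      unfolding \<Delta>_def
      by (intro continuous_intros continuous_on_subset[OF flow_continuous[OF x]]
          continuous_on_subset[OF flow_continuous[OF x0]]) auto
    fix s assume "0 \<le> s" "s \<le> \<tau>" "\<And>t. 0 < t \<Longrightarrow> t < s \<Longrightarrow> norm (\<Delta> t) < \<delta>"
    from growth[OF this] close show "norm (\<Delta> s) < \<delta>" by linarith
  qed
  then show ?thesis using growth[OF s] s unfolding \<Delta>_def by auto
qed

text \<open>The flow is differentiable along \<open>\<Gamma>\<close> with derivative \<open>Q(\<tau>, x\<^sub>0)\<close>: uniformly on the tube the
  linearisation error of \<open>F\<close> is small, so the deviation \<open>r\<close> of \<open>\<Phi>(t, x) - \<Phi>(t, x\<^sub>0)\<close> from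
  \<open>Q(t, x\<^sub>0)(x - x\<^sub>0)\<close> obeys \<open>|r'| \<le> \<epsilon>\<^sub>1 |x - x\<^sub>0| K + M |r|\<close>.\<close>
lemma flow_linearization:
  assumes x0: "x0 \<in> \<Gamma>" and \<tau>: "\<tau> \<ge> 0" and \<epsilon>: "\<epsilon> > 0"
  shows "\<exists>\<rho>>0. \<forall>x\<in>\<Gamma>. norm (x - x0) < \<rho> \<longrightarrow>
            norm (Phi \<tau> x - Phi \<tau> x0 - Q x0 \<tau> (x - x0)) \<le> \<epsilon> * norm (x - x0)"
proof -
  obtain \<delta> N where \<delta>: "\<delta> > 0" and cN: "compact N" and NU: "N \<subseteq> U"
    and tube: "\<forall>s\<in>{0..\<tau>}. cball (Phi s x0) \<delta> \<subseteq> N"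
    using compact_tube[OF x0 \<tau>] by blast
  obtain M where M: "M \<ge> 0" and MN: "\<And>p. p \<in> N \<Longrightarrow> norm (f' p) + norm (g' p) \<le> M"
    using DF_bounded_on_compact[OF cN NU] by blast
  define K where "K = exp ((M + 1) * \<tau>)"
  have K: "K \<ge> 1" unfolding K_def using M \<tau> by simp
  define \<epsilon>1 where "\<epsilon>1 = \<epsilon> / K\<^sup>2"
  have \<epsilon>1: "\<epsilon>1 > 0" unfolding \<epsilon>1_def using \<epsilon> K by simp
  obtain \<eta> where \<eta>: "\<eta> > 0"
    and unif: "\<And>p q. p \<in> N \<Longrightarrow> q \<in> N \<Longrightarrow> dist q p < \<eta> \<Longrightarrow> norm (f' q - f' p) + norm (g' q - g' p) \<le> \<epsilon>1"
    using DF_uniformly_continuous_on_compact[OF cN NU \<epsilon>1] by blast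
  define \<rho> where "\<rho> = min \<delta> \<eta> / K"
  show ?thesis
  proof (intro exI[of _ \<rho>] conjI ballI impI)
    show "\<rho> > 0" unfolding \<rho>_def using \<delta> \<eta> K by simp
    fix x assume x: "x \<in> \<Gamma>" and close: "norm (x - x0) < \<rho>"
    define n0 where "n0 = norm (x - x0)"
    have n0K: "n0 * K < min \<delta> \<eta>" using close K unfolding n0_def \<rho>_def by (simp add: field_simps)
    have "norm (x - x0) * exp ((M + 1) * \<tau>) < \<delta>" using n0K unfolding n0_def K_def by simp
    from orbit_separation_bound[OF x0 x \<delta> M tube NU MN this]
    have sep: "norm (Phi t x - Phi t x0) \<le> n0 * K" if "0 \<le> t" "t \<le> \<tau>" for t
      using that unfolding n0_def K_def by blast
    define r where "r s = Phi s x - Phi s x0 - Q x0 s (x - x0)" for s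
    define r' where "r' s = (f (Phi s x), g (Phi s x)) - (f (Phi s x0), g (Phi s x0))
                            - DFapp f' g' (Phi s x0) (Q x0 s (x - x0))" for s
    have dr: "(r has_vector_derivative r' s) (at s within {0..})" if "s \<ge> 0" for s
      unfolding r_def r'_def using Q_solution[OF x0, of "x - x0"] that
      unfolding is_variational_solution_def
      by (intro has_vector_derivative_diff flow_deriv x x0) auto
    have "norm (r \<tau>) \<le> (norm (r 0) + \<epsilon>1 * n0 * K) * exp ((M + 1) * \<tau>)"
    proof (rule affine_growth_bound[where r=r and r'=r', OF _ _ M _ \<tau>])
      show "(r has_vector_derivative r' t) (at t within {0..})" if "0 \<le> t" "t \<le> \<tau>" for t
        using dr that by simp
      fix t :: real assume t: "0 < t" "t < \<tau>"
      have t': "t \<in> {0..\<tau>}" and sep_t: "norm (Phi t x - Phi t x0) \<le> n0 * K" using sep t by auto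
      have n0K0: "n0 * K \<ge> 0" unfolding n0_def using K by simp
      have "cball (Phi t x0) (n0 * K) \<subseteq> cball (Phi t x0) \<delta>" using n0K by (intro subset_cball) simp
      then have ball: "cball (Phi t x0) (n0 * K) \<subseteq> N" using tube t' by blast
      have yN: "Phi t x0 \<in> N" using subsetD[OF ball] n0K0 by simp
      have "norm (r' t) \<le> \<epsilon>1 * norm (Phi t x - Phi t x0) + M * norm (r t)"
        unfolding r'_def r_def
      proof (rule F_remainder_bound[OF subset_trans[OF ball NU] sep_t _ MN[OF yN]])
        fix p assume p: "p \<in> cball (Phi t x0) (n0 * K)"
        then have "dist p (Phi t x0) < \<eta>" using n0K by (simp add: dist_commute)
        then show "norm (f' p - f' (Phi t x0)) + norm (g' p - g' (Phi t x0)) \<le> \<epsilon>1"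
          by (rule unif[OF yN subsetD[OF ball p]])
      qed
      moreover have "\<epsilon>1 * norm (Phi t x - Phi t x0) \<le> \<epsilon>1 * n0 * K"
        using mult_left_mono[OF sep_t, of \<epsilon>1] \<epsilon>1 by (simp add: mult.assoc)
      ultimately show "norm (r' t) \<le> \<epsilon>1 * n0 * K + M * norm (r t)" by linarith
    qed (use \<epsilon>1 n0_def K in auto)
    also have "\<dots> = \<epsilon> * n0" unfolding r_def \<epsilon>1_def K_def[symmetric]
      using K by (simp add: flow0[OF x] flow0[OF x0] Q_zero_time[OF x0] power2_eq_square field_simps)
    finally show "norm (Phi \<tau> x - Phi \<tau> x0 - Q x0 \<tau> (x - x0)) \<le> \<epsilon> * norm (x - x0)"
      unfolding r_def n0_def .
  qed
qed

lemma secant_flow_linearization: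
  assumes x0: "x0 \<in> \<Gamma>" and X: "\<And>n. X n \<in> \<Gamma>" and t: "t \<ge> 0"
    and \<sigma>: "\<And>n. \<sigma> n > 0" and \<sigma>0: "\<sigma> \<longlonglongrightarrow> 0"
    and bound: "\<And>n. norm (X n - x0) \<le> C * \<sigma> n"
  shows "(\<lambda>n. (1 / \<sigma> n) *\<^sub>R (Phi t (X n) - Phi t x0) - Q x0 t ((1 / \<sigma> n) *\<^sub>R (X n - x0))) \<longlonglongrightarrow> 0"
  unfolding LIMSEQ_iff
proof (intro allI impI)
  fix \<epsilon> :: real assume \<epsilon>: "\<epsilon> > 0"
  have C: "C \<ge> 0" using bound[of 0] \<sigma>[of 0] by (smt (verit) norm_ge_zero zero_le_mult_iff)
  obtain \<rho> where \<rho>: "\<rho> > 0" and lin: "\<forall>x\<in>\<Gamma>. norm (x - x0) < \<rho> \<longrightarrow>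
      norm (Phi t x - Phi t x0 - Q x0 t (x - x0)) \<le> (\<epsilon> / (C + 1)) * norm (x - x0)"
    using flow_linearization[OF x0 t, of "\<epsilon> / (C + 1)"] \<epsilon> C by auto
  obtain N where N: "\<forall>n\<ge>N. norm (\<sigma> n - 0) < \<rho> / (C + 1)"
    using \<sigma>0 \<rho> C unfolding LIMSEQ_iff by (metis add_nonneg_pos divide_pos_pos zero_less_one)
  show "\<exists>N. \<forall>n\<ge>N. norm ((1 / \<sigma> n) *\<^sub>R (Phi t (X n) - Phi t x0) - Q x0 t ((1 / \<sigma> n) *\<^sub>R (X n - x0)) - 0) < \<epsilon>"
  proof (intro exI allI impI)
    fix n assume "n \<ge> N"
    then have "\<bar>\<sigma> n\<bar> * (C + 1) < \<rho>" using N C by (simp add: field_simps)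
    then have "(C + 1) * \<sigma> n < \<rho>" using \<sigma>[of n] by (simp add: mult.commute)
    then have "norm (X n - x0) < \<rho>" using bound[of n] \<sigma>[of n] by (smt (verit) mult_right_mono)
    then have err: "norm (Phi t (X n) - Phi t x0 - Q x0 t (X n - x0)) \<le> \<epsilon> / (C + 1) * (C * \<sigma> n)"
      using lin X bound[of n] \<epsilon> C by (smt (verit) divide_nonneg_nonneg mult_left_mono)
    have "(1 / \<sigma> n) *\<^sub>R (Phi t (X n) - Phi t x0) - Q x0 t ((1 / \<sigma> n) *\<^sub>R (X n - x0))
          = (1 / \<sigma> n) *\<^sub>R (Phi t (X n) - Phi t x0 - Q x0 t (X n - x0))"
      unfolding linear_scale[OF Q_linear] by (simp add: scaleR_diff_right)
    then have "norm ((1 / \<sigma> n) *\<^sub>R (Phi t (X n) - Phi t x0) - Q x0 t ((1 / \<sigma> n) *\<^sub>R (X n - x0)))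
          = norm (Phi t (X n) - Phi t x0 - Q x0 t (X n - x0)) / \<sigma> n"
      using \<sigma>[of n] by simp
    also have "\<dots> \<le> \<epsilon> / (C + 1) * C"
      using err \<sigma>[of n] by (simp add: divide_le_eq mult.assoc)
    also have "\<dots> < \<epsilon>" using \<epsilon> C by (simp add: field_simps)
    finally show "norm ((1 / \<sigma> n) *\<^sub>R (Phi t (X n) - Phi t x0) - Q x0 t ((1 / \<sigma> n) *\<^sub>R (X n - x0)) - 0) < \<epsilon>"
      by simp
  qed
qed

text \<open>Limits of normalised secants of \<open>\<Gamma>\<close> at \<open>x\<^sub>0\<close> lie in \<open>T(x\<^sub>0)\<close>: the flow maps a secant to a
  secant of \<open>\<Gamma>\<close>, which lies outside the cone, and to first order it acts by \<open>Q(t, x\<^sub>0)\<close>; the cone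
  form is continuous.\<close>
lemma secant_limit_in_noncone_set:
  assumes x0: "x0 \<in> \<Gamma>" and X: "\<And>n. X n \<in> \<Gamma>"
    and \<sigma>: "\<And>n. \<sigma> n > 0" and \<sigma>0: "\<sigma> \<longlonglongrightarrow> 0"
    and bound: "\<And>n. norm (X n - x0) \<le> C * \<sigma> n"
    and lim: "(\<lambda>n. (1 / \<sigma> n) *\<^sub>R (X n - x0)) \<longlonglongrightarrow> v"
  shows "v \<in> noncone_set x0"
  unfolding noncone_set_def
proof (intro CollectI allI impI)
  fix t :: real assume t: "t \<ge> 0"
  define D where "D n = (1 / \<sigma> n) *\<^sub>R (Phi t (X n) - Phi t x0)" for n
  have "cone_form (D n) \<le> 0" for n
  proof -
    have "cone_form (Phi t (X n) - Phi t x0) \<le> 0"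
      using Gamma_noncone[OF flow_in[OF X t] flow_in[OF x0 t]] by (simp add: cone_form_nonpos_iff)
    then show ?thesis unfolding D_def cone_form_scaleR by (simp add: mult_nonneg_nonpos)
  qed
  moreover have "D \<longlonglongrightarrow> Q x0 t v"
    using tendsto_add[OF secant_flow_linearization[OF x0 X t \<sigma> \<sigma>0 bound]
        bounded_linear.tendsto[OF Q_bounded_linear[of x0 t] lim]]
    unfolding D_def by simp
  ultimately show "cone_form (Q x0 t v) \<le> 0"
    using LIMSEQ_le_const2[OF isCont_tendsto_compose[OF continuous_cone_form]] by blast
qed

text \<open>The
  difference quotients of \<open>h\<close> are bounded since \<open>h\<close> is 1-Lipschitz, and each of their limits
  \<open>(a, u)\<close> is a limit of normalised secants of \<open>\<Gamma>\<close>, hence lies in \<open>T(h(z\<^sub>0), z\<^sub>0)\<close>, i.e. \<open>a = H u\<close>.\<close>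
lemma h_has_derivative:
  assumes z0: "z0 \<in> snd ` U"
  shows "(h has_derivative H (h z0, z0)) (at z0)"
proof -
  define x0 where "x0 = (h z0, z0)"
  have x0: "x0 \<in> \<Gamma>" unfolding x0_def by (rule graph_Gamma[OF z0])
  obtain r where r: "r > 0" "ball z0 r \<subseteq> snd ` U"
    using open_image_snd[OF H1_open] z0 open_contains_ball by blast
  show ?thesis
  proof (rule has_derivative_sequential_criterion[OF H_linear[OF x0, unfolded x0_def] r(1)])
    show "norm (h y - h z0) \<le> 1 * norm (y - z0)" if "y \<in> ball z0 r" for y
      using h_lipschitz[OF subsetD[OF r(2) that] z0] by simp
    fix Y u a
    assume Y: "\<And>n. Y n \<in> ball z0 r \<and> Y n \<noteq> z0" and "Y \<longlonglongrightarrow> z0"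
      and ulim: "(\<lambda>n. (1 / norm (Y n - z0)) *\<^sub>R (Y n - z0)) \<longlonglongrightarrow> u"
      and alim: "(\<lambda>n. (1 / norm (Y n - z0)) *\<^sub>R (h (Y n) - h z0)) \<longlonglongrightarrow> a"
    have YU: "Y n \<in> snd ` U" for n using Y r(2) by blast
    have "(a, u) \<in> noncone_set x0"
    proof (rule secant_limit_in_noncone_set[OF x0 graph_Gamma[OF YU]])
      show "norm (Y n - z0) > 0" for n using Y by simp
      show "(\<lambda>n. norm (Y n - z0)) \<longlonglongrightarrow> 0"
        using tendsto_norm[OF LIM_zero[OF \<open>Y \<longlonglongrightarrow> z0\<close>]] by simp
      show "norm ((h (Y n), Y n) - x0) \<le> 2 * norm (Y n - z0)" for n
        using norm_Pair_le[of "h (Y n) - h z0" "Y n - z0"] h_lipschitz[OF YU z0, of n]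
        unfolding x0_def by simp
      show "(\<lambda>n. (1 / norm (Y n - z0)) *\<^sub>R ((h (Y n), Y n) - x0)) \<longlonglongrightarrow> (a, u)"
        using tendsto_Pair[OF alim ulim] unfolding x0_def by simp
    qed
    then show "a = H (h z0, z0) u" using noncone_set_unique[OF x0] unfolding x0_def by blast
  qed
qed

end

theorem lemma2p11:
  fixes f :: "'a::euclidean_space \<times> 'b::euclidean_space \<Rightarrow> 'a"
    and g :: "'a \<times> 'b \<Rightarrow> 'b"
    and f' :: "'a \<times> 'b \<Rightarrow> ('a \<times> 'b) \<Rightarrow>\<^sub>L 'a"
    and g' :: "'a \<times> 'b \<Rightarrow> ('a \<times> 'b) \<Rightarrow>\<^sub>L 'b"
    and U \<Gamma> :: "('a \<times> 'b) set"
    and Phi :: "real \<Rightarrow> 'a \<times> 'b \<Rightarrow> 'a \<times> 'b"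
    and alpha ell :: "'a \<times> 'b \<Rightarrow> real"
    and d c1 :: real
    and h :: "'b \<Rightarrow> 'a"
  assumes H1_open: "open U" and H1_convex: "convex U" and H1_d: "d > 0"
    and H1_cone: "\<forall>x\<in>U. Ccone x \<inter> U \<subseteq> Bbox d x"
    and H2_f: "\<forall>x\<in>U. (f has_derivative blinfun_apply (f' x)) (at x)"
    and H2_g: "\<forall>x\<in>U. (g has_derivative blinfun_apply (g' x)) (at x)"
    and H2_fcont: "continuous_on U f'" and H2_gcont: "continuous_on U g'"
    and H2_alpha: "continuous_on U alpha" "\<forall>x\<in>U. alpha x > 0"
    and H2_ell: "continuous_on U ell" "\<forall>x\<in>U. ell x \<ge> 0"
    and H2_c1: "c1 > 0"
    and H2_a: "\<forall>x\<in>U. \<forall>a'. inner a' (blinfun_apply (f' x) (a', 0)) \<ge> alpha x * (norm a')^2"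
    and H2_z: "\<forall>x\<in>U. \<forall>z'. inner z' (blinfun_apply (g' x) (0, z')) \<le> ell x * (norm z')^2"
    and H2_dom: "\<forall>x\<in>U. alpha x \<ge> ell x + onorm (\<lambda>z'. blinfun_apply (f' x) (0, z'))
                                  + onorm (\<lambda>a'. blinfun_apply (g' x) (a', 0)) + c1"
    and H3_sub: "\<Gamma> \<subseteq> U"
    and H3_flow: "\<forall>x\<in>\<Gamma>. Phi 0 x = x \<and>
        (\<forall>t\<ge>0. ((\<lambda>s. Phi s x) has_vector_derivative (f (Phi t x), g (Phi t x))) (at t within {0..})
               \<and> Phi t x \<in> \<Gamma>)"
    and H3_proj: "snd ` \<Gamma> = snd ` U"
    and h_graph: "\<Gamma> = {(h z, z) | z. z \<in> snd ` U}"
  shows "\<forall>z\<in>snd ` U. (h has_derivative Hmap f' g' Phi (h z, z)) (at z)"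
proof
  interpret invariant_graph f g f' g' U \<Gamma> Phi alpha ell d c1 h
    by (rule invariant_graph.intro) (rule assms)+
  fix z assume z: "z \<in> snd ` U"
  show "(h has_derivative Hmap f' g' Phi (h z, z)) (at z)"
    using h_has_derivative[OF z] Hmap_eq_H[OF graph_Gamma[OF z]] by simp
qed

end
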